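(* For every normed plane $(V,\|\cdot\|)$, $$0\le c_S(\|\cdot\|)\le\frac83.$$ Moreover, $c_S(\|\cdot\|)=0$ if and only if the norm is derived from an inner product, and $c_S(\|\cdot\|)=\frac83$ if and only if the plane is rectilinear.
   Context: A normed (Minkowski) plane $(V,\|\cdot\|)$ is a two-dimensional real vector space with a norm; $S=\{v:\|v\|=1\}$ is its unit circle. For nonzero $x,y$, $x$ is Birkhoff orthogonal to $y$, written $x\dashv_B y$, if $\|x+ty\|\ge\|x\|$ for all $t\in\mathbb{R}$ (this forces $x,y$ to be linearly independent). For linearly independent $x,y\in V$, $T_{xy}:V\to V$ is the linear map with $T_{xy}(x)=x$ and $T_{xy}(y)=-y$. The constant $c_S$ is $$c_S(\|\cdot\|)=\sup_{x\dashv_B y}\Big(\sup_{z\in T_{xy}(S)}\|z\|-\inf_{w\in T_{xy}(S)}\|w\|\Big),$$ the outer supremum over all nonzero $x,y\in V$ with $x\dashv_B y$. A normed plane is rectilinear if its unit circle is a parallelogram. *)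

theory Defs
  imports "HOL-Analysis.Analysis"
begin

text \<open>A norm on a real vector space, given as a function (the plane carries its own
norm N, independent of the Euclidean norm of the ambient type).\<close>
definition is_norm :: "('a::real_vector \<Rightarrow> real) \<Rightarrow> bool" where
  "is_norm N \<longleftrightarrow>
     (\<forall>x. 0 \<le> N x) \<and> (\<forall>x. N x = 0 \<longleftrightarrow> x = 0) \<and>
     (\<forall>c x. N (c *\<^sub>R x) = \<bar>c\<bar> * N x) \<and>
     (\<forall>x y. N (x + y) \<le> N x + N y)"

definition unit_circle :: "('a::real_vector \<Rightarrow> real) \<Rightarrow> 'a set" where
  "unit_circle N = {v. N v = 1}"

definition birkhoff_orth :: "('a::real_vector \<Rightarrow> real) \<Rightarrow> 'a \<Rightarrow> 'a \<Rightarrow> bool" where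
  "birkhoff_orth N x y \<longleftrightarrow> x \<noteq> 0 \<and> y \<noteq> 0 \<and> (\<forall>t::real. N (x + t *\<^sub>R y) \<ge> N x)"

definition Txy :: "'a::real_vector \<Rightarrow> 'a \<Rightarrow> 'a \<Rightarrow> 'a" where
  "Txy x y = (THE f. linear f \<and> f x = x \<and> f y = - y)"

definition cS :: "('a::real_vector \<Rightarrow> real) \<Rightarrow> real" where
  "cS N = (SUP p \<in> {(x, y). birkhoff_orth N x y}.
             (SUP z \<in> Txy (fst p) (snd p) ` unit_circle N. N z)
           - (INF w \<in> Txy (fst p) (snd p) ` unit_circle N. N w))"

definition inner_product_norm :: "('a::real_vector \<Rightarrow> real) \<Rightarrow> bool" where
  "inner_product_norm N \<longleftrightarrow>
     (\<exists>B :: 'a \<Rightarrow> 'a \<Rightarrow> real.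
        (\<forall>x y z. B (x + y) z = B x z + B y z) \<and>
        (\<forall>c x y. B (c *\<^sub>R x) y = c * B x y) \<and>
        (\<forall>x y. B x y = B y x) \<and>
        (\<forall>x. x \<noteq> 0 \<longrightarrow> B x x > 0) \<and>
        (\<forall>x. N x = sqrt (B x x)))"

definition rectilinear :: "('a::euclidean_space \<Rightarrow> real) \<Rightarrow> bool" where
  "rectilinear N \<longleftrightarrow>
     (\<exists>c u v. u \<noteq> v \<and> independent {u, v} \<and>
        unit_circle N = frontier (convex hull {c, c + u, c + u + v, c + v}))"

end

theory Submission
  imports Defs
begin

text \<open>For \<open>x \<dashv> y\<close> write \<open>z = a x + b y\<close>. Then \<open>T\<^sub>x\<^sub>y z = 2 a x - z\<close> and \<open>\<bar>a\<bar> \<parallel>x\<parallel> \<le> \<parallel>z\<parallel>\<close>, so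
  \<open>\<parallel>T\<^sub>x\<^sub>y z\<parallel> \<le> 3 \<parallel>z\<parallel>\<close> and, \<open>T\<^sub>x\<^sub>y\<close> being an involution, \<open>\<parallel>z\<parallel> \<le> 3 \<parallel>T\<^sub>x\<^sub>y z\<parallel>\<close>; every term of
  \<open>c\<^sub>S\<close> thus lies in \<open>[0, 3 - 1/3]\<close>.

  \<open>c\<^sub>S = 0\<close> says exactly that every \<open>T\<^sub>x\<^sub>y\<close> is an isometry. Then Birkhoff orthogonality is
  symmetric and unique, the unit circle is strictly convex, \<open>u + v \<dashv> u - v\<close> for unit \<open>u, v\<close>,
  and the quarter turn \<open>x \<mapsto> y \<mapsto> -x\<close> of a unit pair \<open>x \<dashv> y\<close> is a product of two reflections,
  hence an isometry; this forces \<open>\<parallel>a x + b y\<parallel> = \<surd>(a\<^sup>2 + b\<^sup>2)\<close>.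

  \<open>c\<^sub>S = 8/3\<close> is attained, by compactness, at unit \<open>x, z\<close> with \<open>\<parallel>T\<^sub>x\<^sub>y z\<parallel> = 3\<close>. The resulting
  equality in the triangle inequality makes the norm an \<open>\<ell>\<^sup>1\<close>-norm, whose unit circle is a
  parallelogram; conversely the max-norm of a parallelogram has such a triple.\<close>

section \<open>Norms given as functions\<close>

lemma symmetric_bilinear_expand:
  fixes B :: "'a::real_vector \<Rightarrow> 'a \<Rightarrow> real"
  assumes add: "\<And>x y z. B (x + y) z = B x z + B y z"
    and scale: "\<And>c x y. B (c *\<^sub>R x) y = c * B x y"
    and sym: "\<And>x y. B x y = B y x"
  shows "B (a *\<^sub>R p + b *\<^sub>R q) (a *\<^sub>R p + b *\<^sub>R q) = a * a * B p p + 2 * a * b * B p q + b * b * B q q"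
  using add[of _ _ "a *\<^sub>R p"] add[of _ _ "b *\<^sub>R q"] sym[of _ "a *\<^sub>R p"] sym[of _ "b *\<^sub>R q"] sym[of q p]
  by (simp add: add scale algebra_simps)

locale norm_fun =
  fixes N :: "'a::real_vector \<Rightarrow> real"
  assumes is_norm: "is_norm N"
begin

lemma N_nonneg: "0 \<le> N x"
  using is_norm unfolding is_norm_def by auto

lemma N_eq_0_iff [simp]: "N x = 0 \<longleftrightarrow> x = 0"
  using is_norm unfolding is_norm_def by auto

lemma N_scaleR: "N (c *\<^sub>R x) = \<bar>c\<bar> * N x"
  using is_norm unfolding is_norm_def by auto

lemma N_triangle: "N (x + y) \<le> N x + N y"
  using is_norm unfolding is_norm_def by auto

lemma N_0 [simp]: "N 0 = 0"
  by simp

lemma N_pos: "x \<noteq> 0 \<Longrightarrow> 0 < N x"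
  using N_nonneg[of x] by (simp add: less_le)

lemma N_minus [simp]: "N (- x) = N x"
  using N_scaleR[of "-1" x] by simp

lemma N_minus_commute: "N (x - y) = N (y - x)"
  by (metis N_minus minus_diff_eq)

lemma N_triangle_diff: "N (x - y) \<le> N x + N y"
  using N_triangle[of x "- y"] by simp

lemma N_reverse_triangle: "\<bar>N x - N y\<bar> \<le> N (x - y)"
  using N_triangle[of "x - y" y] N_triangle[of "y - x" x] N_minus_commute[of x y] by simp

lemma N_sum_le: "N (sum f S) \<le> (\<Sum>x\<in>S. N (f x))"
proof (induction S rule: infinite_finite_induct)
  case (insert x S)
  then show ?case
    using N_triangle[of "f x" "sum f S"] by simp
qed simp_all

lemma N_convex_comb:
  assumes "0 \<le> t" "t \<le> 1"
  shows "N ((1 - t) *\<^sub>R a + t *\<^sub>R b) \<le> (1 - t) * N a + t * N b"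
  using N_triangle[of "(1 - t) *\<^sub>R a" "t *\<^sub>R b"] assms by (simp add: N_scaleR)

lemma N_normalize: "x \<noteq> 0 \<Longrightarrow> N ((1 / N x) *\<^sub>R x) = 1"
  using N_pos[of x] by (simp add: N_scaleR)

lemma convex_sublevel_le: "convex {z. N z \<le> r}"
proof (rule convexI)
  fix x y :: 'a and u v :: real
  assume "x \<in> {z. N z \<le> r}" "y \<in> {z. N z \<le> r}" and uv: "0 \<le> u" "0 \<le> v" "u + v = 1"
  then have "u * N x + v * N y \<le> r"
    by (auto intro: convex_bound_le)
  then show "u *\<^sub>R x + v *\<^sub>R y \<in> {z. N z \<le> r}"
    using N_triangle[of "u *\<^sub>R x" "v *\<^sub>R y"] uv by (simp add: N_scaleR)
qed

lemma N_nonneg_comb_if_additive: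
  assumes add: "N (p + q) = N p + N q" and "0 \<le> s" "0 \<le> t"
  shows "N (s *\<^sub>R p + t *\<^sub>R q) = s * N p + t * N q"
proof (rule antisym)
  show "N (s *\<^sub>R p + t *\<^sub>R q) \<le> s * N p + t * N q"
    using N_triangle[of "s *\<^sub>R p" "t *\<^sub>R q"] assms by (simp add: N_scaleR)
  show "s * N p + t * N q \<le> N (s *\<^sub>R p + t *\<^sub>R q)"
  proof (cases "t \<le> s")
    case True
    have "s *\<^sub>R (p + q) = (s *\<^sub>R p + t *\<^sub>R q) + (s - t) *\<^sub>R q"
      by (simp add: algebra_simps)
    then have "N (s *\<^sub>R (p + q)) \<le> N (s *\<^sub>R p + t *\<^sub>R q) + N ((s - t) *\<^sub>R q)"
      using N_triangle by metis
    then have "s * (N p + N q) \<le> N (s *\<^sub>R p + t *\<^sub>R q) + (s - t) * N q"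
      using add assms True by (simp add: N_scaleR)
    then show ?thesis by (simp add: algebra_simps)
  next
    case False
    have "t *\<^sub>R (p + q) = (s *\<^sub>R p + t *\<^sub>R q) + (t - s) *\<^sub>R p"
      by (simp add: algebra_simps)
    then have "N (t *\<^sub>R (p + q)) \<le> N (s *\<^sub>R p + t *\<^sub>R q) + N ((t - s) *\<^sub>R p)"
      using N_triangle by metis
    then have "t * (N p + N q) \<le> N (s *\<^sub>R p + t *\<^sub>R q) + (t - s) * N p"
      using add assms False by (simp add: N_scaleR)
    then show ?thesis by (simp add: algebra_simps)
  qed
qed

lemma N_on_line_convex:
  assumes "a < r" "r < b"
  shows "(b - a) * N (p + r *\<^sub>R w) \<le> (b - r) * N (p + a *\<^sub>R w) + (r - a) * N (p + b *\<^sub>R w)"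
proof -
  define t where "t = (r - a) / (b - a)"
  have t: "0 \<le> t" "t \<le> 1" "t * (b - a) = r - a" "(1 - t) * (b - a) = b - r"
    using assms by (auto simp: t_def field_simps)
  then have "p + r *\<^sub>R w = (1 - t) *\<^sub>R (p + a *\<^sub>R w) + t *\<^sub>R (p + b *\<^sub>R w)"
    by (simp add: algebra_simps flip: scaleR_add_left)
  then have "(b - a) * N (p + r *\<^sub>R w)
      \<le> (b - a) * ((1 - t) * N (p + a *\<^sub>R w) + t * N (p + b *\<^sub>R w))"
    using N_convex_comb[OF t(1,2)] assms by (intro mult_left_mono) auto
  also have "\<dots> = ((1 - t) * (b - a)) * N (p + a *\<^sub>R w) + (t * (b - a)) * N (p + b *\<^sub>R w)"
    by (simp add: algebra_simps)
  finally show ?thesis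
    by (simp only: t(3,4))
qed

lemma N_on_line_ge_if_unit_at_three:
  assumes s: "0 < s" "s < 1"
    and unit: "N p = 1" "N (p + s *\<^sub>R w) = 1" "N (p + w) = 1"
  shows "1 \<le> N (p + t *\<^sub>R w)"
proof -
  let ?f = "\<lambda>t. N (p + t *\<^sub>R w)"
  have f: "?f 0 = 1" "?f s = 1" "?f 1 = 1"
    using unit by auto
  consider "t < 0" | "0 < t" "t < s" | "s < t" "t < 1" | "1 < t" | "t \<in> {0, s, 1}"
    by fastforce
  then show ?thesis
  proof cases
    case 1
    with N_on_line_convex[of t 0 s p w] f s have "s * 1 \<le> s * ?f t"
      by (simp add: algebra_simps)
    with s show ?thesis by simp
  next
    case 2
    with N_on_line_convex[of t s 1 p w] f s have "(1 - s) * 1 \<le> (1 - s) * ?f t"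
      by (simp add: algebra_simps)
    with s show ?thesis by simp
  next
    case 3
    with N_on_line_convex[of 0 s t p w] f s have "s * 1 \<le> s * ?f t"
      by (simp add: algebra_simps)
    with s show ?thesis by simp
  next
    case 4
    with N_on_line_convex[of s 1 t p w] f s have "(1 - s) * 1 \<le> (1 - s) * ?f t"
      by (simp add: algebra_simps)
    with s show ?thesis by simp
  qed (use f in auto)
qed

lemma scaleR_eq_0_if_N_const_on_progression:
  assumes const: "\<And>n::nat. N (q - (real n * k) *\<^sub>R p) = N q"
  shows "k *\<^sub>R p = 0"
proof (rule ccontr)
  assume "k *\<^sub>R p \<noteq> 0"
  then have pos: "0 < \<bar>k\<bar> * N p"
    using N_pos[of "k *\<^sub>R p"] by (simp add: N_scaleR)
  obtain n :: nat where "real n > 2 * N q / (\<bar>k\<bar> * N p)"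
    using reals_Archimedean2 by blast
  then have "real n * (\<bar>k\<bar> * N p) > 2 * N q"
    using pos by (simp add: field_simps)
  moreover have "N ((real n * k) *\<^sub>R p) \<le> N q + N (q - (real n * k) *\<^sub>R p)"
    using N_triangle_diff[of q "q - (real n * k) *\<^sub>R p"] by simp
  ultimately show False
    using const[of n] by (simp add: N_scaleR abs_mult)
qed

lemma N_linear_eq_if_unit_circle:
  assumes "linear f" and unit: "\<And>z. N z = 1 \<Longrightarrow> N (f z) = 1"
  shows "N (f z) = N z"
proof (cases "z = 0")
  case True
  then show ?thesis
    using assms(1) by (simp add: linear_0)
next
  case False
  have "f z = N z *\<^sub>R f ((1 / N z) *\<^sub>R z)"
    using assms(1) False by (simp add: linear_scale)
  then show ?thesis
    using unit[OF N_normalize[OF False]] N_nonneg[of z] by (simp add: N_scaleR)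
qed

lemma N_eq_if_same_unit_ball:
  assumes hom: "\<And>c z. g (c *\<^sub>R z) = \<bar>c\<bar> * g z" and ball: "\<And>z. N z \<le> 1 \<longleftrightarrow> g z \<le> 1"
  shows "N z = g z"
proof -
  have le_iff: "N z \<le> r \<longleftrightarrow> g z \<le> r" if "0 < r" for r
    using ball[of "(1 / r) *\<^sub>R z"] that by (simp add: N_scaleR hom field_simps)
  have "0 \<le> g z"
  proof (rule ccontr)
    assume "\<not> 0 \<le> g z"
    then have "N z \<le> 0 + e" if "0 < e" for e
      using le_iff[OF that] that by simp
    then have "N z \<le> 0"
      by (rule field_le_epsilon)
    then have "z = 0"
      using N_nonneg[of z] by simp
    with \<open>\<not> 0 \<le> g z\<close> show False
      using hom[of 0 0] by simp
  qed
  have "N z \<le> g z + e" "g z \<le> N z + e" if "0 < e" for e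
    using le_iff[of "g z + e"] le_iff[of "N z + e"] that \<open>0 \<le> g z\<close> N_nonneg[of z] by simp_all
  then show ?thesis
    by (meson antisym field_le_epsilon)
qed

lemma birkhoff_orth_nonzero: "birkhoff_orth N x y \<Longrightarrow> x \<noteq> 0 \<and> y \<noteq> 0"
  by (simp add: birkhoff_orth_def)

lemma birkhoff_orthD: "birkhoff_orth N x y \<Longrightarrow> N x \<le> N (x + t *\<^sub>R y)"
  by (simp add: birkhoff_orth_def)

lemma birkhoff_orth_coeff_le:
  assumes "birkhoff_orth N x y"
  shows "\<bar>a\<bar> * N x \<le> N (a *\<^sub>R x + b *\<^sub>R y)"
proof (cases "a = 0")
  case False
  then have "a *\<^sub>R x + b *\<^sub>R y = a *\<^sub>R (x + (b / a) *\<^sub>R y)"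
    by (simp add: scaleR_add_right)
  then show ?thesis
    using birkhoff_orthD[OF assms, of "b / a"] by (simp add: N_scaleR mult_left_mono)
qed (simp add: N_nonneg)

lemma birkhoff_orth_scaleR:
  assumes "birkhoff_orth N x y" "a \<noteq> 0" "b \<noteq> 0"
  shows "birkhoff_orth N (a *\<^sub>R x) (b *\<^sub>R y)"
  unfolding birkhoff_orth_def
proof (intro conjI allI)
  show "a *\<^sub>R x \<noteq> 0" "b *\<^sub>R y \<noteq> 0"
    using assms birkhoff_orth_nonzero by auto
  show "N (a *\<^sub>R x) \<le> N (a *\<^sub>R x + t *\<^sub>R b *\<^sub>R y)" for t
    using birkhoff_orth_coeff_le[OF assms(1), of a "t * b"] by (simp add: N_scaleR)
qed

end

section \<open>Finite-dimensional spaces\<close>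

lemma subset_convex_if_frontier_subset:
  fixes A B :: "'a::euclidean_space set"
  assumes "closed A" "bounded A" "convex B" "frontier A \<subseteq> B"
  shows "A \<subseteq> B"
proof
  fix z assume z: "z \<in> A"
  show "z \<in> B"
  proof (cases "z \<in> interior A")
    case False
    then show ?thesis
      using z assms(1,4) by (auto simp: frontier_def)
  next
    case True
    obtain l :: 'a where l: "l \<noteq> 0"
      using nonzero_Basis by blast
    obtain d1 where d1: "0 < d1" "z + d1 *\<^sub>R l \<in> B"
      using ray_to_frontier[OF assms(2) True l] assms(4) by blast
    have "- l \<noteq> 0"
      using l by simp
    then obtain d2 where d2: "0 < d2" "z + d2 *\<^sub>R (- l) \<in> B"
      using ray_to_frontier[OF assms(2) True] assms(4) by blast
    let ?a = "d2 / (d1 + d2)" and ?b = "d1 / (d1 + d2)"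
    have "?a *\<^sub>R (z + d1 *\<^sub>R l) + ?b *\<^sub>R (z + d2 *\<^sub>R (- l)) = z"
      using d1 d2 by (simp add: algebra_simps flip: scaleR_add_left add_divide_distrib)
    moreover have "?a *\<^sub>R (z + d1 *\<^sub>R l) + ?b *\<^sub>R (z + d2 *\<^sub>R (- l)) \<in> B"
      using d1 d2 by (intro convexD[OF assms(3)]) (auto simp: add_divide_distrib[symmetric])
    ultimately show ?thesis
      by simp
  qed
qed

definition unit_ball :: "('a::real_vector \<Rightarrow> real) \<Rightarrow> 'a set" where
  "unit_ball N = {v. N v \<le> 1}"

locale finite_dim_norm_fun = norm_fun N for N :: "'a::euclidean_space \<Rightarrow> real"
begin

lemma N_le_norm: "N p \<le> (\<Sum>b\<in>Basis. N b) * norm p"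
proof -
  have "N p \<le> (\<Sum>b\<in>Basis. \<bar>p \<bullet> b\<bar> * N b)"
    using N_sum_le[of "\<lambda>b. (p \<bullet> b) *\<^sub>R b" Basis] by (simp add: euclidean_representation N_scaleR)
  also have "\<dots> \<le> (\<Sum>b\<in>Basis. norm p * N b)"
    by (intro sum_mono mult_right_mono Basis_le_norm N_nonneg)
  finally show ?thesis
    by (simp add: sum_distrib_left mult.commute)
qed

lemma N_lipschitz: "(\<Sum>b\<in>Basis. N b)-lipschitz_on UNIV N"
proof (rule lipschitz_onI)
  show "dist (N x) (N y) \<le> (\<Sum>b\<in>Basis. N b) * dist x y" for x y
    using N_reverse_triangle[of x y] N_le_norm[of "x - y"] by (simp add: dist_real_def dist_norm)
qed (simp add: sum_nonneg N_nonneg)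

lemma continuous_on_N: "continuous_on S N"
  using lipschitz_on_continuous_on[OF N_lipschitz] continuous_on_subset by blast

lemma isCont_N: "isCont N x"
  using continuous_on_N[of UNIV] continuous_on_eq_continuous_at by blast

lemma tendsto_N: "(f \<longlongrightarrow> l) F \<Longrightarrow> ((\<lambda>n. N (f n)) \<longlongrightarrow> N l) F"
  using isCont_N isCont_tendsto_compose by blast

lemma N_ge_norm: "\<exists>m>0. \<forall>p. m * norm p \<le> N p"
proof -
  obtain p0 where p0: "p0 \<in> sphere 0 1" "\<And>q. q \<in> sphere 0 1 \<Longrightarrow> N p0 \<le> N q"
    using continuous_attains_inf[of "sphere (0::'a) 1" N] continuous_on_N by fastforce
  have "N p0 * norm p \<le> N p" for p
  proof (cases "p = 0")
    case False
    then have "N p0 \<le> N ((1 / norm p) *\<^sub>R p)"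
      by (intro p0(2)) simp
    with False show ?thesis
      by (simp add: N_scaleR field_simps)
  qed simp
  moreover have "N p0 > 0"
    using p0(1) by (intro N_pos) auto
  ultimately show ?thesis
    by blast
qed

lemma bounded_unit_ball: "bounded (unit_ball N)"
proof -
  obtain m where m: "m > 0" "\<And>p. m * norm p \<le> N p"
    using N_ge_norm by blast
  have "norm z \<le> 1 / m" if "N z \<le> 1" for z
    using m(2)[of z] that m(1) by (simp add: field_simps)
  then show ?thesis
    unfolding bounded_iff unit_ball_def by blast
qed

lemma closed_unit_ball: "closed (unit_ball N)"
  unfolding unit_ball_def using closed_Collect_le[OF continuous_on_N continuous_on_const] by simp

lemma convex_unit_ball: "convex (unit_ball N)"
  unfolding unit_ball_def by (rule convex_sublevel_le)

lemma compact_unit_circle: "compact (unit_circle N)"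
proof -
  have "closed (unit_circle N)"
    unfolding unit_circle_def using closed_Collect_eq[OF continuous_on_N continuous_on_const] by simp
  moreover have "unit_circle N \<subseteq> unit_ball N"
    by (auto simp: unit_circle_def unit_ball_def)
  ultimately show ?thesis
    using bounded_unit_ball bounded_subset compact_eq_bounded_closed by blast
qed

lemma interior_unit_ball: "interior (unit_ball N) = {z. N z < 1}"
proof
  show "{z. N z < 1} \<subseteq> interior (unit_ball N)"
    by (rule interior_maximal) (auto simp: unit_ball_def intro: open_Collect_less continuous_on_N)
  show "interior (unit_ball N) \<subseteq> {z. N z < 1}"
  proof
    fix z assume z: "z \<in> interior (unit_ball N)"
    then obtain e where e: "e > 0" "ball z e \<subseteq> unit_ball N"
      using open_contains_ball open_interior interior_subset by (metis subset_trans)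
    show "z \<in> {z. N z < 1}"
    proof (rule ccontr)
      assume "z \<notin> {z. N z < 1}"
      then have z1: "N z = 1"
        using z interior_subset[of "unit_ball N"] by (auto simp: unit_ball_def)
      then have "z \<noteq> 0"
        by auto
      define w where "w = (1 + e / (2 * norm z)) *\<^sub>R z"
      have "dist z w < e"
        using \<open>z \<noteq> 0\<close> e by (simp add: w_def dist_norm algebra_simps)
      then have "N w \<le> 1"
        using e(2) by (auto simp: unit_ball_def)
      moreover have "N w = 1 + e / (2 * norm z)"
        using e z1 by (simp add: w_def N_scaleR)
      moreover have "0 < e / (2 * norm z)"
        using e \<open>z \<noteq> 0\<close> by simp
      ultimately show False
        by simp
    qed
  qed
qed

lemma frontier_unit_ball: "frontier (unit_ball N) = unit_circle N"
proof -
  have "frontier (unit_ball N) = unit_ball N - {z. N z < 1}"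
    by (simp add: frontier_def closure_closed[OF closed_unit_ball] interior_unit_ball)
  then show ?thesis
    unfolding unit_ball_def unit_circle_def by fastforce
qed

lemma convex_compact_eq_unit_ball:
  assumes "compact P" "convex P" "frontier P = unit_circle N"
  shows "P = unit_ball N"
proof
  show "P \<subseteq> unit_ball N"
  proof (rule subset_convex_if_frontier_subset)
    show "closed P" "bounded P"
      using assms(1) by (simp_all add: compact_imp_closed compact_imp_bounded)
    show "frontier P \<subseteq> unit_ball N"
      using assms(3) by (auto simp: unit_ball_def unit_circle_def)
  qed (rule convex_unit_ball)
  have "frontier (unit_ball N) \<subseteq> P"
    using assms(3) frontier_unit_ball frontier_subset_closed[OF compact_imp_closed[OF assms(1)]]
    by simp
  then show "unit_ball N \<subseteq> P"
    by (rule subset_convex_if_frontier_subset[OF closed_unit_ball bounded_unit_ball assms(2)])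
qed

lemma birkhoff_orth_limit:
  assumes "X \<longlonglongrightarrow> x" "Y \<longlonglongrightarrow> y" "x \<noteq> 0" "y \<noteq> 0" "\<And>n. birkhoff_orth N (X n) (Y n)"
  shows "birkhoff_orth N x y"
  unfolding birkhoff_orth_def
proof (intro conjI allI)
  fix t
  have "(\<lambda>n. N (X n)) \<longlonglongrightarrow> N x" "(\<lambda>n. N (X n + t *\<^sub>R Y n)) \<longlonglongrightarrow> N (x + t *\<^sub>R y)"
    by (intro tendsto_N tendsto_intros assms(1,2))+
  then show "N x \<le> N (x + t *\<^sub>R y)"
    using birkhoff_orthD[OF assms(5)] by (intro LIMSEQ_le) auto
qed (use assms in auto)

lemma birkhoff_orth_exists:
  assumes "2 \<le> DIM('a)" "m \<noteq> 0"
  obtains y where "birkhoff_orth N m y"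
proof -
  define u where "u = (1 / N m) *\<^sub>R m"
  have u: "N u = 1"
    unfolding u_def using assms(2) by (rule N_normalize)
  have "0 \<in> interior (unit_ball N)"
    using interior_unit_ball by simp
  then have "interior (unit_ball N) \<noteq> {}"
    by blast
  then have ri: "rel_interior (unit_ball N) = {z. N z < 1}"
    using interior_unit_ball rel_interior_nonempty_interior by blast
  have "u \<in> closure (unit_ball N)" "u \<notin> rel_interior (unit_ball N)"
    using u closure_closed[OF closed_unit_ball] ri by (auto simp: unit_ball_def)
  then obtain a where "a \<noteq> 0" and a: "\<And>w. w \<in> rel_interior (unit_ball N) \<Longrightarrow> a \<bullet> u < a \<bullet> w"
    using supporting_hyperplane_relative_frontier[OF convex_unit_ball] by metis
  obtain y where y: "y \<noteq> 0" "orthogonal a y"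
    using orthogonal_to_vector_exists[OF assms(1)] by blast
  have "birkhoff_orth N u y"
    unfolding birkhoff_orth_def
  proof (intro conjI allI)
    show "N u \<le> N (u + t *\<^sub>R y)" for t
      using a[of "u + t *\<^sub>R y"] y u ri by (force simp: inner_add_right orthogonal_def)
  qed (use u y in auto)
  then have "birkhoff_orth N (N m *\<^sub>R u) y"
    using birkhoff_orth_scaleR[of u y "N m" 1] assms(2) by simp
  with assms(2) show ?thesis
    by (simp add: u_def that)
qed

end

section \<open>The plane: coordinates and the reflections \<open>T\<^sub>x\<^sub>y\<close>\<close>

locale plane = finite_dim_norm_fun N for N :: "'a::euclidean_space \<Rightarrow> real" +
  fixes e1 e2 :: 'a
  assumes Basis_eq: "Basis = {e1, e2}" and e1_neq_e2: "e1 \<noteq> e2"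
begin

lemma DIM_eq_2: "DIM('a) = 2"
  using e1_neq_e2 by (simp add: Basis_eq)

lemma inner_e [simp]: "e1 \<bullet> e1 = 1" "e2 \<bullet> e2 = 1" "e1 \<bullet> e2 = 0" "e2 \<bullet> e1 = 0"
  using e1_neq_e2 by (auto simp: Basis_eq inner_Basis)

lemma plane_eqI: "x \<bullet> e1 = y \<bullet> e1 \<Longrightarrow> x \<bullet> e2 = y \<bullet> e2 \<Longrightarrow> x = y"
  by (rule euclidean_eqI) (auto simp: Basis_eq)

lemma plane_representation: "x = (x \<bullet> e1) *\<^sub>R e1 + (x \<bullet> e2) *\<^sub>R e2"
  by (rule plane_eqI) (simp_all add: inner_add_left)

definition det2 :: "'a \<Rightarrow> 'a \<Rightarrow> real" where
  "det2 p q = (p \<bullet> e1) * (q \<bullet> e2) - (p \<bullet> e2) * (q \<bullet> e1)"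

lemma det2_simps [simp]:
  "det2 p p = 0"
  "det2 (p + q) r = det2 p r + det2 q r" "det2 r (p + q) = det2 r p + det2 r q"
  "det2 (p - q) r = det2 p r - det2 q r" "det2 r (p - q) = det2 r p - det2 r q"
  "det2 (c *\<^sub>R p) q = c * det2 p q" "det2 p (c *\<^sub>R q) = c * det2 p q"
  "det2 (- p) q = - det2 p q" "det2 p (- q) = - det2 p q"
  "det2 0 q = 0" "det2 q 0 = 0"
  by (auto simp: det2_def algebra_simps inner_add_left inner_diff_left)

lemma det2_swap: "det2 q p = - det2 p q"
  by (simp add: det2_def)

lemma det2_eq_0_imp_parallel:
  assumes "det2 p q = 0" "q \<noteq> 0"
  obtains c where "p = c *\<^sub>R q"
proof (cases "q \<bullet> e1 = 0")
  case True
  then have "q \<bullet> e2 \<noteq> 0"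
    using assms(2) plane_representation[of q] by auto
  with True assms(1) have "p = ((p \<bullet> e2) / (q \<bullet> e2)) *\<^sub>R q"
    by (intro plane_eqI) (auto simp: det2_def field_simps)
  then show ?thesis ..
next
  case False
  with assms(1) have "p = ((p \<bullet> e1) / (q \<bullet> e1)) *\<^sub>R q"
    by (intro plane_eqI) (auto simp: det2_def field_simps)
  then show ?thesis ..
qed

lemma det2_decompose:
  assumes "det2 x y \<noteq> 0"
  shows "z = (det2 z y / det2 x y) *\<^sub>R x + (det2 x z / det2 x y) *\<^sub>R y"
proof -
  have "det2 x y *\<^sub>R z = det2 z y *\<^sub>R x + det2 x z *\<^sub>R y"
    by (rule plane_eqI) (auto simp: det2_def inner_add_left algebra_simps)
  then have "z = (1 / det2 x y) *\<^sub>R (det2 z y *\<^sub>R x + det2 x z *\<^sub>R y)"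
    using assms by (metis divide_self_if scaleR_one scaleR_scaleR
        times_divide_eq_left mult.commute)
  then show ?thesis
    using assms by (simp add: scaleR_add_right)
qed

lemma det2_coeffs_unique:
  assumes "det2 x y \<noteq> 0" "a *\<^sub>R x + b *\<^sub>R y = c *\<^sub>R x + d *\<^sub>R y"
  shows "a = c \<and> b = d"
proof -
  have "det2 (a *\<^sub>R x + b *\<^sub>R y) y = det2 (c *\<^sub>R x + d *\<^sub>R y) y"
    "det2 x (a *\<^sub>R x + b *\<^sub>R y) = det2 x (c *\<^sub>R x + d *\<^sub>R y)"
    using assms(2) by auto
  then show ?thesis
    using assms(1) by simp
qed

lemma linear_eq_on_det2_basis:
  assumes "det2 x y \<noteq> 0" "linear f" "linear g" "f x = g x" "f y = g y"
  shows "f = g"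
proof
  fix z
  define a b where "a = det2 z y / det2 x y" and "b = det2 x z / det2 x y"
  have z: "z = a *\<^sub>R x + b *\<^sub>R y"
    unfolding a_def b_def by (rule det2_decompose[OF assms(1)])
  show "f z = g z"
    unfolding z using assms(2-5) by (simp add: linear_add linear_scale)
qed

lemma independent_iff_det2: "independent {u, v} \<and> u \<noteq> v \<longleftrightarrow> det2 u v \<noteq> 0"
proof
  assume uv: "independent {u, v} \<and> u \<noteq> v"
  show "det2 u v \<noteq> 0"
  proof
    assume "det2 u v = 0"
    moreover have "v \<noteq> 0"
      using uv dependent_zero by blast
    ultimately obtain k where "u = k *\<^sub>R v"
      by (rule det2_eq_0_imp_parallel)
    then have "u \<in> span {v}"
      by (simp add: span_base span_scale)
    then show False
      using uv independent_insert[of u "{v}"] by auto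
  qed
next
  assume d: "det2 u v \<noteq> 0"
  have "u \<notin> span {v}"
    using d by (auto simp: span_singleton)
  then show "independent {u, v} \<and> u \<noteq> v"
    using d independent_insert[of u "{v}"] by auto
qed

lemma birkhoff_orth_det2_nonzero:
  assumes "birkhoff_orth N x y"
  shows "det2 x y \<noteq> 0"
proof
  assume "det2 x y = 0"
  moreover have "x \<noteq> 0" "y \<noteq> 0"
    using birkhoff_orth_nonzero[OF assms] by auto
  ultimately obtain c where "x = c *\<^sub>R y"
    by (metis det2_eq_0_imp_parallel)
  then have "x + (- c) *\<^sub>R y = 0"
    by simp
  then show False
    using birkhoff_orthD[OF assms, of "- c"] N_pos[OF \<open>x \<noteq> 0\<close>] by simp
qed

lemma birkhoff_orth_exists_plane:
  assumes "m \<noteq> 0"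
  obtains y where "birkhoff_orth N m y"
  using birkhoff_orth_exists[OF _ assms] DIM_eq_2 by auto

text \<open>An explicit formula for the map \<open>Txy\<close>, whose definition by description is only
  meaningful when \<open>x, y\<close> is a basis.\<close>
definition reflect :: "'a \<Rightarrow> 'a \<Rightarrow> 'a \<Rightarrow> 'a" where
  "reflect x y z = z - (2 * det2 x z / det2 x y) *\<^sub>R y"

lemma linear_reflect: "linear (reflect x y)"
  by (rule linearI) (auto simp: reflect_def algebra_simps scaleR_add_left add_divide_distrib)

lemma reflect_comb:
  assumes "det2 x y \<noteq> 0"
  shows "reflect x y (a *\<^sub>R x + b *\<^sub>R y) = a *\<^sub>R x - b *\<^sub>R y"
  using assms by (simp add: reflect_def algebra_simps flip: scaleR_add_left)

lemma reflect_fst: "det2 x y \<noteq> 0 \<Longrightarrow> reflect x y x = x"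
  by (simp add: reflect_def)

lemma reflect_snd: "det2 x y \<noteq> 0 \<Longrightarrow> reflect x y y = - y"
  by (simp add: reflect_def scaleR_2)

lemma Txy_eq_reflect_if_linear:
  assumes "det2 x y \<noteq> 0" "linear f" "f x = x" "f y = - y"
  shows "Txy x y = f"
  unfolding Txy_def
proof (rule the_equality)
  show "linear f \<and> f x = x \<and> f y = - y"
    using assms by auto
  show "g = f" if "linear g \<and> g x = x \<and> g y = - y" for g
    using linear_eq_on_det2_basis[OF assms(1), of g f] assms that by auto
qed

lemma Txy_eq_reflect: "det2 x y \<noteq> 0 \<Longrightarrow> Txy x y = reflect x y"
  by (rule Txy_eq_reflect_if_linear) (auto simp: linear_reflect reflect_fst reflect_snd)

lemma reflect_reflect:
  assumes "det2 x y \<noteq> 0"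
  shows "reflect x y (reflect x y z) = z"
proof -
  have "reflect x y \<circ> reflect x y = id"
    using assms linear_reflect[of x y]
    by (intro linear_eq_on_det2_basis[OF assms]) (auto simp: linear_compose linear_id reflect_fst reflect_snd
        linear_neg)
  then show ?thesis
    by (metis comp_apply id_apply)
qed

lemma reflect_scaleR:
  assumes "det2 x y \<noteq> 0" "a \<noteq> 0" "b \<noteq> 0"
  shows "reflect (a *\<^sub>R x) (b *\<^sub>R y) z = reflect x y z"
proof -
  have "(2 * (a * det2 x z) / (a * (b * det2 x y))) * b = 2 * det2 x z / det2 x y"
    using assms by (simp add: field_simps)
  then show ?thesis
    unfolding reflect_def by simp
qed

text \<open>With \<open>z = a x + b y\<close> one has \<open>T z = 2 a x - z\<close>, and \<open>\<bar>a\<bar> N x \<le> N z\<close> by Birkhoff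
  orthogonality.\<close>
lemma N_reflect_le:
  assumes "birkhoff_orth N x y"
  shows "N (reflect x y z) \<le> 3 * N z"
proof -
  have d: "det2 x y \<noteq> 0"
    by (rule birkhoff_orth_det2_nonzero[OF assms])
  define a b where "a = det2 z y / det2 x y" and "b = det2 x z / det2 x y"
  have z: "z = a *\<^sub>R x + b *\<^sub>R y"
    unfolding a_def b_def by (rule det2_decompose[OF d])
  have "reflect x y z = a *\<^sub>R x - b *\<^sub>R y"
    using reflect_comb[OF d, of a b] z by simp
  also have "\<dots> = (2 * a) *\<^sub>R x - z"
    by (simp add: z algebra_simps scaleR_2 flip: scaleR_scaleR)
  finally have "N (reflect x y z) \<le> 2 * (\<bar>a\<bar> * N x) + N z"
    using N_triangle_diff[of "(2 * a) *\<^sub>R x" z] by (simp add: N_scaleR abs_mult)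
  also have "\<bar>a\<bar> * N x \<le> N z"
    using birkhoff_orth_coeff_le[OF assms, of a b] z by simp
  finally show ?thesis
    by simp
qed

lemma N_le_reflect:
  assumes "birkhoff_orth N x y"
  shows "N z \<le> 3 * N (reflect x y z)"
  using N_reflect_le[OF assms, of "reflect x y z"]
  by (simp add: reflect_reflect[OF birkhoff_orth_det2_nonzero[OF assms]])

definition spread :: "'a \<Rightarrow> 'a \<Rightarrow> real" where
  "spread x y = (SUP z \<in> Txy x y ` unit_circle N. N z) - (INF w \<in> Txy x y ` unit_circle N. N w)"

lemma cS_eq_SUP_spread: "cS N = (SUP p \<in> {(x, y). birkhoff_orth N x y}. spread (fst p) (snd p))"
  unfolding cS_def spread_def by simp

lemma unit_circle_nonempty: "unit_circle N \<noteq> {}"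
  using N_normalize[of e1] nonzero_Basis Basis_eq by (auto simp: unit_circle_def)

lemma birkhoff_pairs_nonempty: "{(x, y). birkhoff_orth N x y} \<noteq> {}"
  using birkhoff_orth_exists_plane[of e1] nonzero_Basis Basis_eq by (metis case_prodI empty_iff
      insertI1 mem_Collect_eq)

lemma N_Txy_unit_circle_bounds:
  assumes "birkhoff_orth N x y" "w \<in> Txy x y ` unit_circle N"
  shows "1/3 \<le> N w \<and> N w \<le> 3"
proof -
  obtain z where "N z = 1" "w = reflect x y z"
    using assms Txy_eq_reflect[OF birkhoff_orth_det2_nonzero[OF assms(1)]]
    by (auto simp: unit_circle_def)
  then show ?thesis
    using N_reflect_le[OF assms(1), of z] N_le_reflect[OF assms(1), of z] by auto
qed

lemma bdd_N_Txy_unit_circle: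
  assumes "birkhoff_orth N x y"
  shows "bdd_above (N ` Txy x y ` unit_circle N)" "bdd_below (N ` Txy x y ` unit_circle N)"
  using N_Txy_unit_circle_bounds[OF assms] by (auto intro!: bdd_aboveI[of _ 3] bdd_belowI[of _ "1/3"])

lemma INF_le_SUP_N_Txy:
  assumes "birkhoff_orth N x y" "w \<in> Txy x y ` unit_circle N"
  shows "(INF w \<in> Txy x y ` unit_circle N. N w) \<le> N w" "N w \<le> (SUP z \<in> Txy x y ` unit_circle N. N z)"
  by (rule cINF_lower[OF bdd_N_Txy_unit_circle(2)[OF assms(1)] assms(2)],
      rule cSUP_upper[OF assms(2) bdd_N_Txy_unit_circle(1)[OF assms(1)]])

lemma spread_bounds:
  assumes "birkhoff_orth N x y"
  shows "0 \<le> spread x y" "spread x y \<le> 8/3"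
proof -
  let ?A = "Txy x y ` unit_circle N"
  have ne: "?A \<noteq> {}"
    using unit_circle_nonempty by blast
  then obtain w where "w \<in> ?A"
    by blast
  then show "0 \<le> spread x y"
    using INF_le_SUP_N_Txy[OF assms] unfolding spread_def by fastforce
  have "(SUP z\<in>?A. N z) \<le> 3"
    by (rule cSUP_least[OF ne]) (use N_Txy_unit_circle_bounds[OF assms] in auto)
  moreover have "1/3 \<le> (INF z\<in>?A. N z)"
    by (rule cINF_greatest[OF ne]) (use N_Txy_unit_circle_bounds[OF assms] in auto)
  ultimately show "spread x y \<le> 8/3"
    unfolding spread_def by simp
qed

lemma bdd_above_spread: "bdd_above ((\<lambda>p. spread (fst p) (snd p)) ` {(x, y). birkhoff_orth N x y})"
  by (rule bdd_aboveI[of _ "8/3"]) (auto dest: spread_bounds(2))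

lemma spread_le_cS: "birkhoff_orth N x y \<Longrightarrow> spread x y \<le> cS N"
  unfolding cS_eq_SUP_spread using cSUP_upper[OF _ bdd_above_spread, of "(x, y)"] by simp

lemma cS_nonneg: "0 \<le> cS N"
proof -
  obtain x y where "birkhoff_orth N x y"
    using birkhoff_pairs_nonempty by blast
  then show ?thesis
    using spread_bounds(1) spread_le_cS by fastforce
qed

lemma cS_le: "cS N \<le> 8/3"
  unfolding cS_eq_SUP_spread
  by (rule cSUP_least[OF birkhoff_pairs_nonempty]) (auto dest: spread_bounds(2))

end

section \<open>Isometric reflections and inner products\<close>

context plane
begin

lemma birkhoff_orth_if_reflect_isometric:
  assumes d: "det2 p q \<noteq> 0" and iso: "\<And>z. N (reflect p q z) = N z"
  shows "birkhoff_orth N p q"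
  unfolding birkhoff_orth_def
proof (intro conjI allI)
  show "p \<noteq> 0" "q \<noteq> 0"
    using d by auto
  fix t :: real
  have "N (p - t *\<^sub>R q) = N (p + t *\<^sub>R q)"
    using iso[of "1 *\<^sub>R p + t *\<^sub>R q"] reflect_comb[OF d, of 1 t] by simp
  moreover have "N (2 *\<^sub>R p) \<le> N (p + t *\<^sub>R q) + N (p - t *\<^sub>R q)"
    using N_triangle[of "p + t *\<^sub>R q" "p - t *\<^sub>R q"] by (simp add: scaleR_2)
  ultimately show "N p \<le> N (p + t *\<^sub>R q)"
    by (simp add: N_scaleR)
qed

lemma reflect_swap:
  assumes d: "det2 p q \<noteq> 0"
  shows "reflect q p z = - reflect p q z"
proof -
  have d': "det2 q p \<noteq> 0"
    using d det2_swap[of q p] by simp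
  have "Txy q p = (\<lambda>z. - reflect p q z)"
    by (rule Txy_eq_reflect_if_linear[OF d' linear_compose_neg[OF linear_reflect]])
      (simp_all add: reflect_fst[OF d] reflect_snd[OF d])
  then show ?thesis
    using Txy_eq_reflect[OF d'] by metis
qed

lemma reflect_reflect_shear:
  assumes d1: "det2 p q1 \<noteq> 0" and d2: "det2 p q2 \<noteq> 0"
  shows "reflect p q1 (reflect p q2 (q1 - t *\<^sub>R p)) = q1 - (2 * det2 q2 q1 / det2 p q2 + t) *\<^sub>R p"
proof -
  define c e where "c = det2 q2 q1 / det2 p q1" and "e = det2 p q2 / det2 p q1"
  have q2: "q2 = c *\<^sub>R p + e *\<^sub>R q1"
    unfolding c_def e_def by (rule det2_decompose[OF d1])
  have e0: "e \<noteq> 0"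
    using d1 d2 by (simp add: e_def)
  define k where "k = 2 * det2 q2 q1 / det2 p q2"
  have k: "k = 2 * c / e"
    using d1 by (simp add: k_def c_def e_def)
  have "det2 p q2 = e * det2 p q1"
    using q2 by simp
  then have "reflect p q2 q1 = q1 - (2 / e) *\<^sub>R (c *\<^sub>R p + e *\<^sub>R q1)"
    using d1 e0 q2 by (simp add: reflect_def)
  also have "\<dots> = - q1 - k *\<^sub>R p"
    using e0 by (simp add: k scaleR_add_right algebra_simps scaleR_2)
  finally have "reflect p q2 (q1 - t *\<^sub>R p) = (- (k + t)) *\<^sub>R p + (-1) *\<^sub>R q1"
    using linear_reflect[of p q2] reflect_fst[OF d2] by (simp add: linear_diff linear_scale
        algebra_simps)
  then have "reflect p q1 (reflect p q2 (q1 - t *\<^sub>R p))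
      = reflect p q1 ((- (k + t)) *\<^sub>R p + (-1) *\<^sub>R q1)"
    by (simp only:)
  also have "\<dots> = (- (k + t)) *\<^sub>R p - (-1) *\<^sub>R q1"
    by (rule reflect_comb[OF d1])
  finally show ?thesis
    by (simp add: k_def algebra_simps)
qed

definition isometric_reflections :: bool where
  "isometric_reflections \<longleftrightarrow> (\<forall>x y. birkhoff_orth N x y \<longrightarrow> (\<forall>z. N (reflect x y z) = N z))"

context
  assumes iso: isometric_reflections
begin

lemma N_reflect: "birkhoff_orth N x y \<Longrightarrow> N (reflect x y z) = N z"
  using iso by (simp add: isometric_reflections_def)

lemma birkhoff_orth_sym:
  assumes "birkhoff_orth N p q"
  shows "birkhoff_orth N q p"
proof (rule birkhoff_orth_if_reflect_isometric)
  have d: "det2 p q \<noteq> 0"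
    by (rule birkhoff_orth_det2_nonzero[OF assms])
  then show "det2 q p \<noteq> 0"
    using det2_swap[of q p] by simp
  show "N (reflect q p z) = N z" for z
    using reflect_swap[OF d] N_reflect[OF assms] by simp
qed

text \<open>If \<open>q\<^sub>1, q\<^sub>2\<close> were independent, the shear composed of the two isometric reflections would
  be nontrivial, and its iterates would move \<open>q\<^sub>1\<close> arbitrarily far while preserving its norm.\<close>
lemma birkhoff_orth_unique:
  assumes b1: "birkhoff_orth N p q1" and b2: "birkhoff_orth N p q2"
  shows "det2 q1 q2 = 0"
proof -
  have d1: "det2 p q1 \<noteq> 0" and d2: "det2 p q2 \<noteq> 0"
    using b1 b2 by (simp_all add: birkhoff_orth_det2_nonzero)
  define k where "k = 2 * det2 q2 q1 / det2 p q2"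
  have "N (q1 - (real n * k) *\<^sub>R p) = N q1" for n
  proof (induction n)
    case (Suc n)
    have "N (q1 - (real (Suc n) * k) *\<^sub>R p) = N (q1 - (k + real n * k) *\<^sub>R p)"
      by (simp add: algebra_simps)
    also have "\<dots> = N (q1 - (real n * k) *\<^sub>R p)"
      using reflect_reflect_shear[OF d1 d2] N_reflect[OF b1] N_reflect[OF b2] by (metis k_def)
    finally show ?case
      using Suc by simp
  qed simp
  then have "k *\<^sub>R p = 0"
    by (rule scaleR_eq_0_if_N_const_on_progression)
  then show ?thesis
    using d1 d2 det2_swap[of q2 q1] by (auto simp: k_def)
qed

text \<open>If an interior point \<open>c\<close> of a chord \<open>[p, q]\<close> of the unit circle had norm 1, the norm
  would be 1 at three points of the line through \<open>p, q\<close> and hence \<open>\<ge> 1\<close> on it; so \<open>q - p\<close>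
  would be Birkhoff orthogonal to both \<open>p\<close> and \<open>c\<close>, contradicting uniqueness.\<close>
lemma N_strict_convex:
  assumes p: "N p = 1" and q: "N q = 1" and "p \<noteq> q" and l: "0 < l" "l < 1"
  shows "N (l *\<^sub>R p + (1 - l) *\<^sub>R q) < 1"
proof (rule ccontr)
  define c where "c = l *\<^sub>R p + (1 - l) *\<^sub>R q"
  define w where "w = q - p"
  assume "\<not> N (l *\<^sub>R p + (1 - l) *\<^sub>R q) < 1"
  moreover have "N c \<le> 1"
    using N_convex_comb[of "1 - l" p q] l p q by (simp add: c_def)
  ultimately have c1: "N c = 1"
    unfolding c_def by linarith
  have w0: "w \<noteq> 0"
    using \<open>p \<noteq> q\<close> by (simp add: w_def)
  have cw: "c = p + (1 - l) *\<^sub>R w"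
    by (simp add: c_def w_def algebra_simps)
  have ge: "1 \<le> N (p + t *\<^sub>R w)" for t
    by (rule N_on_line_ge_if_unit_at_three[of "1 - l"]) (use l p c1 cw q in \<open>auto simp: w_def\<close>)
  have "birkhoff_orth N p w"
    unfolding birkhoff_orth_def using p w0 ge by auto
  moreover have "birkhoff_orth N c w"
    unfolding birkhoff_orth_def
  proof (intro conjI allI)
    fix t
    have "c + t *\<^sub>R w = p + (1 - l + t) *\<^sub>R w"
      using cw by (simp add: algebra_simps)
    then show "N c \<le> N (c + t *\<^sub>R w)"
      using ge[of "1 - l + t"] c1 by simp
  qed (use c1 w0 in auto)
  ultimately have "det2 c p = 0"
    using birkhoff_orth_unique birkhoff_orth_sym by blast
  then have "det2 q p = 0"
    using l by (simp add: c_def)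
  moreover have "p \<noteq> 0"
    using p by auto
  ultimately obtain mu where mu: "q = mu *\<^sub>R p"
    by (rule det2_eq_0_imp_parallel)
  with p q have "mu = 1 \<or> mu = -1"
    by (auto simp: N_scaleR abs_if split: if_splits)
  then show False
  proof
    assume "mu = -1"
    then have "c = (2 * l - 1) *\<^sub>R p"
      using mu by (simp add: c_def algebra_simps scaleR_2 flip: scaleR_scaleR)
    then have "N c = \<bar>2 * l - 1\<bar>"
      using p by (simp add: N_scaleR)
    with c1 l show False
      by auto
  qed (use mu \<open>p \<noteq> q\<close> in simp)
qed

lemma N_on_line_three_values:
  assumes "a \<noteq> 0" and s: "s1 < s2" "s2 < s3"
    and v: "N (s1 *\<^sub>R a + b) = r" "N (s2 *\<^sub>R a + b) = r" "N (s3 *\<^sub>R a + b) = r"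
  shows False
proof -
  have ne: "s1 *\<^sub>R a + b \<noteq> s3 *\<^sub>R a + b"
    using assms by simp
  then have "r \<noteq> 0"
    using v(1,3) by (metis N_eq_0_iff)
  then have r: "r > 0"
    using v N_nonneg by (metis less_eq_real_def)
  define P where "P s = (1 / r) *\<^sub>R (s *\<^sub>R a + b)" for s
  have NP: "N (P s1) = 1" "N (P s2) = 1" "N (P s3) = 1"
    using v r by (auto simp: P_def N_scaleR)
  define l where "l = (s3 - s2) / (s3 - s1)"
  have l: "0 < l" "l < 1"
    using s by (auto simp: l_def field_simps)
  have "l * (s3 - s1) = s3 - s2"
    using s by (simp add: l_def)
  then have s2: "s2 = l * s1 + (1 - l) * s3"
    by (simp add: algebra_simps)
  have "l *\<^sub>R P s1 + (1 - l) *\<^sub>R P s3 = P s2"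
    unfolding P_def s2 by (intro plane_eqI) (simp_all add: inner_add_left algebra_simps
        flip: add_divide_distrib diff_divide_distrib)
  moreover have "P s1 \<noteq> P s3"
    using ne r by (simp add: P_def)
  ultimately show False
    using N_strict_convex[OF NP(1,3) _ l(1,2)] NP(2) by simp
qed

text \<open>Write \<open>u - v = \<alpha> (u + v) + \<beta> y\<close> with \<open>u + v \<dashv> y\<close>. Reflecting in \<open>u + v\<close> shows that
  \<open>(s (u + v) + \<beta> y)\<close> has norm 2 for \<open>s \<in> {\<plusminus>1 \<plusminus> \<alpha>}\<close>, which are three distinct values
  unless \<open>\<alpha> = 0\<close>.\<close>
lemma birkhoff_orth_add_diff:
  assumes u: "N u = 1" and v: "N v = 1" and uv: "u \<noteq> v" "u \<noteq> - v"
  shows "birkhoff_orth N (u + v) (u - v)"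
proof -
  define m where "m = u + v"
  have m0: "m \<noteq> 0"
    using uv(2) by (auto simp: m_def add_eq_0_iff)
  obtain y where bmy: "birkhoff_orth N m y"
    using birkhoff_orth_exists_plane[OF m0] by blast
  have d: "det2 m y \<noteq> 0"
    by (rule birkhoff_orth_det2_nonzero[OF bmy])
  define al be where "al = det2 (u - v) y / det2 m y" and "be = det2 m (u - v) / det2 m y"
  have dd: "u - v = al *\<^sub>R m + be *\<^sub>R y"
    unfolding al_def be_def by (rule det2_decompose[OF d])
  have sym: "N (s *\<^sub>R m + (- be) *\<^sub>R y) = N (s *\<^sub>R m + be *\<^sub>R y)" for s
    using N_reflect[OF bmy, of "s *\<^sub>R m + be *\<^sub>R y"] reflect_comb[OF d, of s be] by simp
  have "(1 + al) *\<^sub>R m + be *\<^sub>R y = 2 *\<^sub>R u" "(1 - al) *\<^sub>R m + (- be) *\<^sub>R y = 2 *\<^sub>R v"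
    using dd by (simp_all add: m_def algebra_simps scaleR_2)
  then have f1: "N ((1 + al) *\<^sub>R m + be *\<^sub>R y) = 2" and f2: "N ((1 - al) *\<^sub>R m + be *\<^sub>R y) = 2"
    using u v sym[of "1 - al"] by (simp_all add: N_scaleR)
  have f3: "N ((- 1 - al) *\<^sub>R m + be *\<^sub>R y) = 2"
    using N_minus[of "(1 + al) *\<^sub>R m + (- be) *\<^sub>R y"] sym[of "1 + al"] f1
    by (simp add: algebra_simps)
  have f4: "N ((al - 1) *\<^sub>R m + be *\<^sub>R y) = 2"
    using N_minus[of "(1 - al) *\<^sub>R m + (- be) *\<^sub>R y"] sym[of "1 - al"] f2
    by (simp add: algebra_simps)
  have "al = 0"
  proof (rule ccontr)
    assume "al \<noteq> 0"
    then consider "al > 0" | "al < 0"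
      by linarith
    then show False
    proof cases
      case 1
      show False
        by (rule N_on_line_three_values[OF m0, of "- 1 - al" "1 - al" "1 + al" "be *\<^sub>R y" 2])
          (use 1 f1 f2 f3 in auto)
    next
      case 2
      show False
        by (rule N_on_line_three_values[OF m0, of "al - 1" "1 + al" "1 - al" "be *\<^sub>R y" 2])
          (use 2 f1 f2 f4 in auto)
    qed
  qed
  then have "u - v = be *\<^sub>R y"
    using dd by simp
  moreover have "be \<noteq> 0"
    using calculation uv(1) by auto
  ultimately show ?thesis
    using birkhoff_orth_scaleR[OF bmy, of 1 be] by (simp add: m_def)
qed

end

lemma reflect_add_diff_swap:
  assumes d: "det2 (u + v) (u - v) \<noteq> 0"
  shows "reflect (u + v) (u - v) u = v" "reflect (u + v) (u - v) v = u"
proof -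
  have "reflect (u + v) (u - v) ((1/2) *\<^sub>R (u + v) + (1/2) *\<^sub>R (u - v))
      = (1/2) *\<^sub>R (u + v) - (1/2) *\<^sub>R (u - v)"
    "reflect (u + v) (u - v) ((1/2) *\<^sub>R (u + v) + (- 1/2) *\<^sub>R (u - v))
      = (1/2) *\<^sub>R (u + v) - (- 1/2) *\<^sub>R (u - v)"
    by (rule reflect_comb[OF d])+
  then show "reflect (u + v) (u - v) u = v" "reflect (u + v) (u - v) v = u"
    by (simp_all add: algebra_simps flip: scaleR_add_left)
qed

definition quarter_turn :: "'a \<Rightarrow> 'a \<Rightarrow> 'a \<Rightarrow> 'a" where
  "quarter_turn x y z = (det2 z y / det2 x y) *\<^sub>R y - (det2 x z / det2 x y) *\<^sub>R x"

lemma linear_quarter_turn: "linear (quarter_turn x y)"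
  by (rule linearI) (auto simp: quarter_turn_def algebra_simps scaleR_add_left add_divide_distrib)

lemma quarter_turn_fst: "det2 x y \<noteq> 0 \<Longrightarrow> quarter_turn x y x = y"
  by (simp add: quarter_turn_def)

lemma quarter_turn_snd: "det2 x y \<noteq> 0 \<Longrightarrow> quarter_turn x y y = - x"
  by (simp add: quarter_turn_def)

lemma quarter_turn_comb:
  assumes "det2 x y \<noteq> 0"
  shows "quarter_turn x y (a *\<^sub>R x + b *\<^sub>R y) = (- b) *\<^sub>R x + a *\<^sub>R y"
  using assms linear_quarter_turn[of x y]
  by (simp add: linear_add linear_scale quarter_turn_fst quarter_turn_snd)

lemma quarter_turn_quarter_turn:
  assumes d: "det2 x y \<noteq> 0"
  shows "quarter_turn x y (quarter_turn x y z) = - z"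
proof -
  have "quarter_turn x y \<circ> quarter_turn x y = uminus"
    using linear_quarter_turn[of x y] d
    by (intro linear_eq_on_det2_basis[OF d])
      (auto simp: linear_compose linear_uminus linear_neg quarter_turn_fst quarter_turn_snd)
  then show ?thesis
    by (metis comp_apply)
qed

lemma det2_quarter_turn:
  assumes d: "det2 x y \<noteq> 0" and "u \<noteq> 0"
  shows "det2 u (quarter_turn x y u) \<noteq> 0"
proof
  assume "det2 u (quarter_turn x y u) = 0"
  then have "det2 (quarter_turn x y u) u = 0"
    using det2_swap[of "quarter_turn x y u" u] by simp
  then obtain c where c: "quarter_turn x y u = c *\<^sub>R u"
    using det2_eq_0_imp_parallel \<open>u \<noteq> 0\<close> by blast
  then have "- u = (c * c) *\<^sub>R u"
    using quarter_turn_quarter_turn[OF d, of u] linear_quarter_turn[of x y]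
    by (simp add: linear_scale)
  then have "(c * c + 1) *\<^sub>R u = 0"
    by (metis add.commute neg_eq_iff_add_eq_0 scaleR_add_left scaleR_one)
  moreover have "c * c + 1 \<noteq> 0"
    by (metis add_nonneg_pos zero_le_square zero_less_one not_less_iff_gr_or_eq)
  ultimately show False
    using \<open>u \<noteq> 0\<close> by simp
qed

context
  assumes iso: isometric_reflections
begin

lemma quarter_turn_eq_reflect_reflect:
  assumes b: "birkhoff_orth N x y" and x1: "N x = 1" and y1: "N y = 1"
  shows "quarter_turn x y = reflect (x + y) (x - y) \<circ> reflect x y"
    and "birkhoff_orth N (x + y) (x - y)"
proof -
  have d: "det2 x y \<noteq> 0"
    by (rule birkhoff_orth_det2_nonzero[OF b])
  show b0: "birkhoff_orth N (x + y) (x - y)"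
    using d by (intro birkhoff_orth_add_diff[OF iso x1 y1]) auto
  have d0: "det2 (x + y) (x - y) \<noteq> 0"
    by (rule birkhoff_orth_det2_nonzero[OF b0])
  show "quarter_turn x y = reflect (x + y) (x - y) \<circ> reflect x y"
    using reflect_add_diff_swap[OF d0] linear_reflect[of "x + y" "x - y"]
    by (intro linear_eq_on_det2_basis[OF d])
      (auto simp: linear_quarter_turn linear_compose linear_reflect quarter_turn_fst[OF d]
        quarter_turn_snd[OF d] reflect_fst[OF d] reflect_snd[OF d] linear_neg)
qed

lemma N_quarter_turn:
  assumes b: "birkhoff_orth N x y" and "N x = 1" "N y = 1"
  shows "N (quarter_turn x y z) = N z"
  using quarter_turn_eq_reflect_reflect[OF assms] N_reflect[OF iso] b by simp

text \<open>The reflection in \<open>u' + J u'\<close> composed with \<open>J\<close> is again a linear map fixing \<open>u'\<close> and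
  negating \<open>J u'\<close>, i.e. it is \<open>T\<^sub>u\<^sub>' \<^sub>J \<^sub>u\<^sub>'\<close>, and it is isometric.\<close>
lemma birkhoff_orth_quarter_turn:
  assumes b: "birkhoff_orth N x y" and x1: "N x = 1" and y1: "N y = 1" and "u \<noteq> 0"
  shows "birkhoff_orth N u (quarter_turn x y u)"
proof -
  let ?J = "quarter_turn x y"
  have d: "det2 x y \<noteq> 0"
    by (rule birkhoff_orth_det2_nonzero[OF b])
  define u' where "u' = (1 / N u) *\<^sub>R u"
  have u'1: "N u' = 1"
    unfolding u'_def using \<open>u \<noteq> 0\<close> by (rule N_normalize)
  then have du: "det2 u' (?J u') \<noteq> 0"
    by (intro det2_quarter_turn[OF d]) auto
  have J1: "N (?J u') = 1"
    using N_quarter_turn[OF b x1 y1] u'1 by simp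
  have ne: "u' \<noteq> ?J u'" "u' \<noteq> - ?J u'"
  proof -
    have "det2 (?J u') (?J u') = 0" "det2 (- ?J u') (?J u') = 0"
      by simp_all
    then show "u' \<noteq> ?J u'" "u' \<noteq> - ?J u'"
      using du by metis+
  qed
  have bb: "birkhoff_orth N (u' + ?J u') (u' - ?J u')"
    by (rule birkhoff_orth_add_diff[OF iso u'1 J1 ne])
  let ?B = "reflect (u' + ?J u') (u' - ?J u')"
  have db: "det2 (u' + ?J u') (u' - ?J u') \<noteq> 0"
    by (rule birkhoff_orth_det2_nonzero[OF bb])
  have "Txy u' (?J u') = ?B \<circ> ?J"
    using reflect_add_diff_swap[OF db] quarter_turn_quarter_turn[OF d] linear_reflect
    by (intro Txy_eq_reflect_if_linear[OF du])
      (auto simp: linear_compose linear_quarter_turn linear_neg)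
  then have "N (reflect u' (?J u') z) = N z" for z
    using Txy_eq_reflect[OF du] N_reflect[OF iso bb] N_quarter_turn[OF b x1 y1] by (metis comp_apply)
  then have "birkhoff_orth N u' (?J u')"
    by (rule birkhoff_orth_if_reflect_isometric[OF du])
  then have "birkhoff_orth N (N u *\<^sub>R u') (N u *\<^sub>R ?J u')"
    using \<open>u \<noteq> 0\<close> by (intro birkhoff_orth_scaleR) auto
  moreover have "N u *\<^sub>R u' = u"
    using \<open>u \<noteq> 0\<close> by (simp add: u'_def)
  ultimately show ?thesis
    using linear_quarter_turn[of x y] by (metis linear_scale)
qed

text \<open>With \<open>e = (1 + a) x + b y\<close>, the point \<open>a x + b y\<close> is the mirror image of \<open>x\<close> in the
  direction \<open>e\<close> along \<open>J e\<close>, where \<open>e \<dashv> J e\<close>.\<close>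
lemma N_unit_circle_comb:
  assumes b: "birkhoff_orth N x y" and x1: "N x = 1" and y1: "N y = 1"
    and ab: "a * a + b * b = 1"
  shows "N (a *\<^sub>R x + b *\<^sub>R y) = 1"
proof (cases "a = -1")
  case True
  then show ?thesis
    using ab x1 by simp
next
  case False
  have d: "det2 x y \<noteq> 0"
    by (rule birkhoff_orth_det2_nonzero[OF b])
  have "-1 \<le> a"
    using ab by (smt (verit) mult_minus_left mult_minus_right mult_le_cancel_left1 zero_le_square)
  with False have a1: "0 < 1 + a"
    by simp
  let ?J = "quarter_turn x y"
  define e where "e = (1 + a) *\<^sub>R x + b *\<^sub>R y"
  have Je: "?J e = (- b) *\<^sub>R x + (1 + a) *\<^sub>R y"
    unfolding e_def by (rule quarter_turn_comb[OF d])
  have "e \<noteq> 0"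
    using det2_coeffs_unique[OF d, of "1 + a" b 0 0] a1 by (auto simp: e_def)
  then have be: "birkhoff_orth N e (?J e)"
    by (rule birkhoff_orth_quarter_turn[OF b x1 y1])
  have de: "det2 e (?J e) \<noteq> 0"
    by (rule birkhoff_orth_det2_nonzero[OF be])
  define dl where "dl = - b / (2 * (1 + a))"
  have c: "(1/2) * (1 + a) + dl * (- b) = 1" "(1/2) * b + dl * (1 + a) = 0"
    "(1/2) * (1 + a) - dl * (- b) = a" "(1/2) * b - dl * (1 + a) = b"
    using a1 ab unfolding dl_def by (simp_all add: field_simps)
  have "x = ((1/2) * (1 + a) + dl * (- b)) *\<^sub>R x + ((1/2) * b + dl * (1 + a)) *\<^sub>R y"
    using c by simp
  also have "\<dots> = (1/2) *\<^sub>R e + dl *\<^sub>R ?J e"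
    unfolding Je by (rule plane_eqI) (simp_all add: e_def inner_add_left algebra_simps)
  finally have "reflect e (?J e) x = (1/2) *\<^sub>R e - dl *\<^sub>R ?J e"
    using reflect_comb[OF de] by metis
  also have "\<dots> = ((1/2) * (1 + a) - dl * (- b)) *\<^sub>R x + ((1/2) * b - dl * (1 + a)) *\<^sub>R y"
    unfolding Je by (rule plane_eqI) (simp_all add: e_def inner_add_left inner_diff_left algebra_simps)
  also have "\<dots> = a *\<^sub>R x + b *\<^sub>R y"
    using c by simp
  finally show ?thesis
    using N_reflect[OF iso be, of x] x1 by simp
qed

lemma inner_product_norm_if_isometric_reflections: "inner_product_norm N"
proof -
  obtain x y where b: "birkhoff_orth N x y" and x1: "N x = 1" and y1: "N y = 1"
  proof -
    obtain x0 y0 where b0: "birkhoff_orth N x0 y0"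
      using birkhoff_pairs_nonempty by blast
    then have "x0 \<noteq> 0" "y0 \<noteq> 0"
      using birkhoff_orth_nonzero by auto
    then show thesis
      using b0 by (intro that[of "(1 / N x0) *\<^sub>R x0" "(1 / N y0) *\<^sub>R y0"] birkhoff_orth_scaleR)
        (auto simp: N_normalize)
  qed
  have d: "det2 x y \<noteq> 0"
    by (rule birkhoff_orth_det2_nonzero[OF b])
  define al where "al z = det2 z y / det2 x y" for z
  define be where "be z = det2 x z / det2 x y" for z
  define B where "B p q = al p * al q + be p * be q" for p q
  have zc: "z = al z *\<^sub>R x + be z *\<^sub>R y" for z
    unfolding al_def be_def by (rule det2_decompose[OF d])
  have pos: "B z z > 0" if "z \<noteq> 0" for z
    using zc[of z] that unfolding B_def by (metis add_pos_nonneg add_nonneg_pos not_real_square_gt_zero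
        zero_le_square scaleR_zero_left add_0)
  have "N z = sqrt (B z z)" for z
  proof (cases "z = 0")
    case False
    define r where "r = sqrt (B z z)"
    have r: "r > 0" "r * r = B z z"
      using pos[OF False] by (simp_all add: r_def)
    have "(al z / r) * (al z / r) + (be z / r) * (be z / r) = 1"
      using r pos[OF False] by (auto simp: B_def field_simps simp flip: add_divide_distrib)
    then have "N ((al z / r) *\<^sub>R x + (be z / r) *\<^sub>R y) = 1"
      by (rule N_unit_circle_comb[OF b x1 y1])
    moreover have "z = r *\<^sub>R ((al z / r) *\<^sub>R x + (be z / r) *\<^sub>R y)"
      using r zc[of z] by (simp add: scaleR_add_right)
    ultimately show ?thesis
      using r by (metis N_scaleR abs_of_pos mult.right_neutral r_def)
  qed (simp add: B_def al_def be_def)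
  then show ?thesis
    unfolding inner_product_norm_def using pos
    by (intro exI[of _ B]) (auto simp: B_def al_def be_def add_divide_distrib algebra_simps)
qed

end

lemma isometric_reflections_if_cS_eq_0:
  assumes "cS N = 0"
  shows isometric_reflections
  unfolding isometric_reflections_def
proof (intro allI impI)
  fix x y z assume b: "birkhoff_orth N x y"
  have d: "det2 x y \<noteq> 0"
    by (rule birkhoff_orth_det2_nonzero[OF b])
  have "x \<noteq> 0"
    using birkhoff_orth_nonzero[OF b] by simp
  let ?A = "Txy x y ` unit_circle N"
  have "spread x y = 0"
    using spread_le_cS[OF b] spread_bounds(1)[OF b] assms by simp
  then have const: "N w = (SUP w\<in>?A. N w)" if "w \<in> ?A" for w
    using INF_le_SUP_N_Txy[OF b that] unfolding spread_def by simp
  have "(1 / N x) *\<^sub>R x \<in> ?A"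
    using Txy_eq_reflect[OF d] linear_reflect[of x y] reflect_fst[OF d] N_normalize[OF \<open>x \<noteq> 0\<close>]
    by (force simp: unit_circle_def linear_scale)
  then have "(SUP w\<in>?A. N w) = 1"
    using const N_normalize[OF \<open>x \<noteq> 0\<close>] by metis
  then have "N (reflect x y z) = 1" if "N z = 1" for z
    using const[of "reflect x y z"] that Txy_eq_reflect[OF d] by (simp add: unit_circle_def)
  then show "N (reflect x y z) = N z"
    by (rule N_linear_eq_if_unit_circle[OF linear_reflect])
qed

lemma cS_eq_0_if_isometric_reflections:
  assumes isometric_reflections
  shows "cS N = 0"
proof -
  have "spread x y = 0" if b: "birkhoff_orth N x y" for x y
  proof -
    have "N w = 1" if "w \<in> Txy x y ` unit_circle N" for w
      using that Txy_eq_reflect[OF birkhoff_orth_det2_nonzero[OF b]] N_reflect[OF assms b]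
      by (auto simp: unit_circle_def)
    then show ?thesis
      using unit_circle_nonempty by (simp add: spread_def)
  qed
  then have "cS N = (SUP p \<in> {(x, y). birkhoff_orth N x y}. 0)"
    unfolding cS_eq_SUP_spread by (intro SUP_cong) auto
  then show ?thesis
    using birkhoff_pairs_nonempty by simp
qed

text \<open>For a norm coming from an inner product \<open>B\<close>, Birkhoff orthogonality is \<open>B\<close>-orthogonality,
  so \<open>T\<^sub>x\<^sub>y\<close> is a \<open>B\<close>-orthogonal reflection.\<close>
lemma isometric_reflections_if_inner_product_norm:
  assumes "inner_product_norm N"
  shows isometric_reflections
proof -
  obtain B :: "'a \<Rightarrow> 'a \<Rightarrow> real" where
    Badd: "\<And>x y z. B (x + y) z = B x z + B y z" and
    Bscale: "\<And>c x y. B (c *\<^sub>R x) y = c * B x y" and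
    Bsym: "\<And>x y. B x y = B y x" and
    Bpos: "\<And>x. x \<noteq> 0 \<Longrightarrow> B x x > 0" and
    BN: "\<And>x. N x = sqrt (B x x)"
    using assms unfolding inner_product_norm_def by blast
  have Bnonneg: "B z z \<ge> 0" for z
    using Bpos[of z] Bscale[of 0 z z] by (cases "z = 0") auto
  have NN: "N z * N z = B z z" for z
    using BN Bnonneg by simp
  note expand = symmetric_bilinear_expand[of B, OF Badd Bscale Bsym]
  have orth: "B x y = 0" if b: "birkhoff_orth N x y" for x y
  proof -
    have byy: "B y y > 0"
      using Bpos birkhoff_orth_nonzero[OF b] by simp
    define t where "t = - B x y / B y y"
    have "N x * N x \<le> N (1 *\<^sub>R x + t *\<^sub>R y) * N (1 *\<^sub>R x + t *\<^sub>R y)"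
      using birkhoff_orthD[OF b, of t] N_nonneg by (intro mult_mono) auto
    then have "0 \<le> 2 * t * B x y + t * t * B y y"
      unfolding NN expand by simp
    also have "2 * t * B x y + t * t * B y y = - (B x y * B x y) / B y y"
      using byy by (simp add: t_def field_simps)
    finally show ?thesis
      using byy by (simp add: divide_nonpos_pos field_simps mult_le_0_iff) linarith
  qed
  show ?thesis
    unfolding isometric_reflections_def
  proof (intro allI impI)
    fix x y z assume b: "birkhoff_orth N x y"
    have d: "det2 x y \<noteq> 0"
      by (rule birkhoff_orth_det2_nonzero[OF b])
    define a c where "a = det2 z y / det2 x y" and "c = det2 x z / det2 x y"
    have z: "z = a *\<^sub>R x + c *\<^sub>R y"
      unfolding a_def c_def by (rule det2_decompose[OF d])
    have "reflect x y z = a *\<^sub>R x + (- c) *\<^sub>R y"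
      using reflect_comb[OF d, of a c] z by simp
    then have "B (reflect x y z) (reflect x y z) = B z z"
      unfolding z by (simp only: expand orth[OF b])
    then show "N (reflect x y z) = N z"
      using BN by simp
  qed
qed

end

section \<open>Rectilinear planes\<close>

lemma l1_ball_subset_convex_hull:
  fixes x z :: "'a::real_vector"
  assumes lm: "\<bar>l\<bar> + \<bar>m\<bar> \<le> 1"
  shows "l *\<^sub>R x + m *\<^sub>R z \<in> convex hull {x, z, - x, - z}"
proof -
  let ?H = "convex hull {x, z, - x, - z}"
  have pts: "x \<in> ?H" "z \<in> ?H" "- x \<in> ?H" "- z \<in> ?H"
    by (simp_all add: hull_inc)
  then have "(1/2) *\<^sub>R x + (1/2) *\<^sub>R (- x) \<in> ?H"
    by (intro convexD[OF convex_convex_hull]) auto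
  then have zero: "0 \<in> ?H"
    by simp
  define sx where "sx = (if 0 \<le> l then x else - x)"
  define sz where "sz = (if 0 \<le> m then z else - z)"
  have sx: "sx \<in> ?H" "l *\<^sub>R x = \<bar>l\<bar> *\<^sub>R sx" and sz: "sz \<in> ?H" "m *\<^sub>R z = \<bar>m\<bar> *\<^sub>R sz"
    using pts by (auto simp: sx_def sz_def)
  show ?thesis
  proof (cases "\<bar>l\<bar> + \<bar>m\<bar> = 0")
    case True
    then have "l = 0" "m = 0"
      by (simp_all add: add_nonneg_eq_0_iff)
    then show ?thesis
      using zero by simp
  next
    case False
    define s where "s = \<bar>l\<bar> + \<bar>m\<bar>"
    have s: "s > 0"
      using False by (simp add: s_def add_nonneg_nonneg less_eq_real_def)
    have "(\<bar>l\<bar> / s) *\<^sub>R sx + (\<bar>m\<bar> / s) *\<^sub>R sz \<in> ?H"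
      by (rule convexD[OF convex_convex_hull sx(1) sz(1)])
        (use s in \<open>auto simp: s_def add_divide_distrib[symmetric]\<close>)
    then have "s *\<^sub>R ((\<bar>l\<bar> / s) *\<^sub>R sx + (\<bar>m\<bar> / s) *\<^sub>R sz) + (1 - s) *\<^sub>R 0 \<in> ?H"
      by (rule convexD[OF convex_convex_hull _ zero]) (use s lm in \<open>auto simp: s_def\<close>)
    moreover have "s *\<^sub>R ((\<bar>l\<bar> / s) *\<^sub>R sx + (\<bar>m\<bar> / s) *\<^sub>R sz) + (1 - s) *\<^sub>R 0 = l *\<^sub>R x + m *\<^sub>R z"
      using s sx(2) sz(2) by (simp add: scaleR_add_right)
    ultimately show ?thesis
      by simp
  qed
qed

definition parallelogram :: "'a::real_vector \<Rightarrow> 'a \<Rightarrow> 'a \<Rightarrow> 'a set" where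
  "parallelogram c u v = {c + s *\<^sub>R u + t *\<^sub>R v | s t. s \<in> {0..1} \<and> t \<in> {0..1}}"

lemma parallelogramI: "s \<in> {0..1} \<Longrightarrow> t \<in> {0..1} \<Longrightarrow> c + s *\<^sub>R u + t *\<^sub>R v \<in> parallelogram c u v"
  unfolding parallelogram_def by blast

lemma convex_parallelogram: "convex (parallelogram c u v)"
proof (rule convexI)
  fix x y and a b :: real
  assume "x \<in> parallelogram c u v" "y \<in> parallelogram c u v" and ab: "0 \<le> a" "0 \<le> b" "a + b = 1"
  then obtain s1 t1 s2 t2 where x: "x = c + s1 *\<^sub>R u + t1 *\<^sub>R v" "s1 \<in> {0..1}" "t1 \<in> {0..1}"
    and y: "y = c + s2 *\<^sub>R u + t2 *\<^sub>R v" "s2 \<in> {0..1}" "t2 \<in> {0..1}"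
    by (auto simp: parallelogram_def)
  have "a *\<^sub>R x + b *\<^sub>R y = c + (a * s1 + b * s2) *\<^sub>R u + (a * t1 + b * t2) *\<^sub>R v"
    unfolding x(1) y(1) using ab(3) by (simp add: algebra_simps flip: scaleR_add_left)
  moreover have "a * s1 + b * s2 \<in> {0..1}" "a * t1 + b * t2 \<in> {0..1}"
    using x y ab by (auto intro: convex_bound_le)
  ultimately show "a *\<^sub>R x + b *\<^sub>R y \<in> parallelogram c u v"
    unfolding parallelogram_def by blast
qed

lemma convex_hull_parallelogram_vertices:
  "convex hull {c, c + u, c + u + v, c + v} = parallelogram c u v"
proof
  have "{c, c + u, c + u + v, c + v} \<subseteq> parallelogram c u v"
    using parallelogramI[of 0 0 c u v] parallelogramI[of 1 0 c u v] parallelogramI[of 1 1 c u v]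
      parallelogramI[of 0 1 c u v] by simp
  then show "convex hull {c, c + u, c + u + v, c + v} \<subseteq> parallelogram c u v"
    by (rule hull_minimal) (rule convex_parallelogram)
  show "parallelogram c u v \<subseteq> convex hull {c, c + u, c + u + v, c + v}"
  proof
    fix z assume "z \<in> parallelogram c u v"
    then obtain s t where z: "z = c + s *\<^sub>R u + t *\<^sub>R v" and st: "s \<in> {0..1}" "t \<in> {0..1}"
      by (auto simp: parallelogram_def)
    let ?H = "convex hull {c, c + u, c + u + v, c + v}"
    have "(1 - s) *\<^sub>R c + s *\<^sub>R (c + u) \<in> ?H" "(1 - s) *\<^sub>R (c + v) + s *\<^sub>R (c + u + v) \<in> ?H"
      using st by (intro convexD[OF convex_convex_hull] hull_inc; simp)+
    then have "(1 - t) *\<^sub>R ((1 - s) *\<^sub>R c + s *\<^sub>R (c + u))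
        + t *\<^sub>R ((1 - s) *\<^sub>R (c + v) + s *\<^sub>R (c + u + v)) \<in> ?H"
      by (rule convexD[OF convex_convex_hull]) (use st in auto)
    moreover have "(1 - t) *\<^sub>R ((1 - s) *\<^sub>R c + s *\<^sub>R (c + u))
        + t *\<^sub>R ((1 - s) *\<^sub>R (c + v) + s *\<^sub>R (c + u + v)) = z"
      unfolding z by (simp add: algebra_simps)
    ultimately show "z \<in> ?H"
      by simp
  qed
qed

context plane
begin

lemma parallelogram_center_if_symmetric:
  assumes d: "det2 u v \<noteq> 0"
    and sym: "\<And>z. z \<in> parallelogram c u v \<Longrightarrow> - z \<in> parallelogram c u v"
  shows "c = - (1/2) *\<^sub>R (u + v)"
proof -
  have "c \<in> parallelogram c u v" "c + u + v \<in> parallelogram c u v"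
    using parallelogramI[of 0 0 c u v] parallelogramI[of 1 1 c u v] by simp_all
  then have "- c \<in> parallelogram c u v" "- (c + u + v) \<in> parallelogram c u v"
    using sym by blast+
  then obtain s1 t1 s2 t2 where st1: "- c = c + s1 *\<^sub>R u + t1 *\<^sub>R v" "s1 \<le> 1" "t1 \<le> 1"
    and st2: "- (c + u + v) = c + s2 *\<^sub>R u + t2 *\<^sub>R v" "0 \<le> s2" "0 \<le> t2"
    unfolding parallelogram_def by auto
  have "s1 *\<^sub>R u + t1 *\<^sub>R v = (s2 + 1) *\<^sub>R u + (t2 + 1) *\<^sub>R v"
    using st1(1) st2(1) by (simp add: algebra_simps)
  then have "s1 = 1" "t1 = 1"
    using det2_coeffs_unique[OF d] st1 st2 by force+
  then have "(- c) \<bullet> e1 = (c + u + v) \<bullet> e1" "(- c) \<bullet> e2 = (c + u + v) \<bullet> e2"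
    using st1(1) by simp_all
  then show ?thesis
    by (intro plane_eqI) (simp_all add: inner_add_left inner_diff_left field_simps)
qed

lemma rectilinear_unit_ball:
  assumes "rectilinear N"
  obtains u v where "det2 u v \<noteq> 0" "unit_ball N = parallelogram (- (1/2) *\<^sub>R (u + v)) u v"
proof -
  obtain c u v where uv: "u \<noteq> v" "independent {u, v}"
    and S: "unit_circle N = frontier (convex hull {c, c + u, c + u + v, c + v})"
    using assms unfolding rectilinear_def by blast
  have d: "det2 u v \<noteq> 0"
    using uv independent_iff_det2 by blast
  have "convex hull {c, c + u, c + u + v, c + v} = unit_ball N"
    by (rule convex_compact_eq_unit_ball) (use S in \<open>auto intro: finite_imp_compact_convex_hull\<close>)
  then have K: "unit_ball N = parallelogram c u v"
    by (simp add: convex_hull_parallelogram_vertices)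
  moreover have "c = - (1/2) *\<^sub>R (u + v)"
    using d by (rule parallelogram_center_if_symmetric) (simp add: K[symmetric] unit_ball_def)
  ultimately show ?thesis
    using that d by blast
qed

lemma N_eq_max_coeff_if_rectilinear:
  assumes d: "det2 u v \<noteq> 0" and K: "unit_ball N = parallelogram (- (1/2) *\<^sub>R (u + v)) u v"
  shows "N (a *\<^sub>R u + b *\<^sub>R v) = 2 * max \<bar>a\<bar> \<bar>b\<bar>"
proof -
  define g where "g z = 2 * max \<bar>det2 z v / det2 u v\<bar> \<bar>det2 u z / det2 u v\<bar>" for z
  have g: "g (a *\<^sub>R u + b *\<^sub>R v) = 2 * max \<bar>a\<bar> \<bar>b\<bar>" for a b
    using d by (simp add: g_def det2_swap[of v u])
  have shift: "- (1/2) *\<^sub>R (u + v) + s *\<^sub>R u + t *\<^sub>R v = (s - 1/2) *\<^sub>R u + (t - 1/2) *\<^sub>R v" for s t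
    by (simp add: algebra_simps)
  have "N z = g z" for z
  proof (rule N_eq_if_same_unit_ball)
    show "g (c *\<^sub>R z) = \<bar>c\<bar> * g z" for c z
      by (simp add: g_def abs_mult max_mult_distrib_left mult_ac)
    fix z
    define \<alpha> \<beta> where "\<alpha> = det2 z v / det2 u v" and "\<beta> = det2 u z / det2 u v"
    have z: "z = \<alpha> *\<^sub>R u + \<beta> *\<^sub>R v"
      unfolding \<alpha>_def \<beta>_def by (rule det2_decompose[OF d])
    have "N z \<le> 1 \<longleftrightarrow> z \<in> parallelogram (- (1/2) *\<^sub>R (u + v)) u v"
      unfolding K[symmetric] unit_ball_def by simp
    also have "\<dots> \<longleftrightarrow> (\<exists>s t. s \<in> {0..1} \<and> t \<in> {0..1} \<and>
        \<alpha> *\<^sub>R u + \<beta> *\<^sub>R v = (s - 1/2) *\<^sub>R u + (t - 1/2) *\<^sub>R v)"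
      unfolding parallelogram_def shift z by blast
    also have "\<dots> \<longleftrightarrow> \<bar>\<alpha>\<bar> \<le> 1/2 \<and> \<bar>\<beta>\<bar> \<le> 1/2"
    proof
      assume "\<exists>s t. s \<in> {0..1} \<and> t \<in> {0..1} \<and>
        \<alpha> *\<^sub>R u + \<beta> *\<^sub>R v = (s - 1/2) *\<^sub>R u + (t - 1/2) *\<^sub>R v"
      then obtain s t where "s \<in> {0..1}" "t \<in> {0..1}" "\<alpha> = s - 1/2" "\<beta> = t - 1/2"
        using det2_coeffs_unique[OF d] by blast
      then show "\<bar>\<alpha>\<bar> \<le> 1/2 \<and> \<bar>\<beta>\<bar> \<le> 1/2"
        by (auto split: abs_split)
    qed (intro exI[of _ "\<alpha> + 1/2"] exI[of _ "\<beta> + 1/2"], auto)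
    also have "\<dots> \<longleftrightarrow> 2 * max \<bar>\<alpha>\<bar> \<bar>\<beta>\<bar> \<le> 1"
      by (auto simp: max_def)
    also have "2 * max \<bar>\<alpha>\<bar> \<bar>\<beta>\<bar> = g z"
      by (simp add: g_def \<alpha>_def \<beta>_def)
    finally show "N z \<le> 1 \<longleftrightarrow> g z \<le> 1" .
  qed
  then show ?thesis
    by (simp add: g)
qed

lemma spread_eq_8_3_if_reflect_eq_3:
  assumes b: "birkhoff_orth N x y" and z1: "N z = 1" and z3: "N (reflect x y z) = 3"
  shows "spread x y = 8/3"
proof -
  have d: "det2 x y \<noteq> 0"
    by (rule birkhoff_orth_det2_nonzero[OF b])
  let ?A = "Txy x y ` unit_circle N"
  have "reflect x y z \<in> ?A"
    using Txy_eq_reflect[OF d] z1 by (auto simp: unit_circle_def)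
  then have sup: "(SUP w\<in>?A. N w) = 3"
    using N_Txy_unit_circle_bounds[OF b] z3 by (intro cSup_eq_maximum) auto
  define z' where "z' = (1/3) *\<^sub>R reflect x y z"
  have "N z' = 1"
    using z3 by (simp add: z'_def N_scaleR)
  then have "reflect x y z' \<in> ?A"
    using Txy_eq_reflect[OF d] by (auto simp: unit_circle_def)
  moreover have "N (reflect x y z') = 1/3"
    using linear_reflect[of x y] reflect_reflect[OF d] z1 by (simp add: z'_def linear_scale N_scaleR)
  ultimately have inf: "(INF w\<in>?A. N w) = 1/3"
    using N_Txy_unit_circle_bounds[OF b] by (intro cInf_eq_minimum) auto
  show ?thesis
    unfolding spread_def sup inf by simp
qed

text \<open>In the max-norm of a parallelogram, \<open>x\<close> is a vertex, \<open>y\<close> an edge direction at \<open>x\<close>,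
  and the reflection sends the adjacent vertex \<open>z\<close> to a point of norm 3.\<close>
lemma cS_eq_8_3_if_rectilinear:
  assumes "rectilinear N"
  shows "cS N = 8/3"
proof -
  obtain u v where d: "det2 u v \<noteq> 0" and K: "unit_ball N = parallelogram (- (1/2) *\<^sub>R (u + v)) u v"
    using rectilinear_unit_ball[OF assms] by blast
  note N_uv = N_eq_max_coeff_if_rectilinear[OF d K]
  define x where "x = (- 1/2) *\<^sub>R u + (- 1/2) *\<^sub>R v"
  define z where "z = (- 1/2) *\<^sub>R u + (1/2) *\<^sub>R v"
  have x1: "N x = 1" and z1: "N z = 1"
    unfolding x_def z_def N_uv by simp_all
  have b: "birkhoff_orth N x u"
    unfolding birkhoff_orth_def
  proof (intro conjI allI)
    show "x \<noteq> 0" "u \<noteq> 0"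
      using x1 d by auto
    fix t :: real
    have "x + t *\<^sub>R u = (t - 1/2) *\<^sub>R u + (- 1/2) *\<^sub>R v"
      by (simp add: x_def algebra_simps)
    then show "N x \<le> N (x + t *\<^sub>R u)"
      using x1 N_uv[of "t - 1/2" "- 1/2"] by (simp add: max_def)
  qed
  have dxu: "det2 x u \<noteq> 0"
    by (rule birkhoff_orth_det2_nonzero[OF b])
  have "z = (- 1) *\<^sub>R x + (- 1) *\<^sub>R u"
    by (simp add: x_def z_def algebra_simps flip: scaleR_add_left)
  then have "reflect x u z = (- 1) *\<^sub>R x - (- 1) *\<^sub>R u"
    using reflect_comb[OF dxu] by metis
  also have "\<dots> = (3/2) *\<^sub>R u + (1/2) *\<^sub>R v"
    by (rule plane_eqI) (simp_all add: x_def inner_add_left algebra_simps)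
  finally have "N (reflect x u z) = 3"
    using N_uv[of "3/2" "1/2"] by simp
  then have "spread x u = 8/3"
    by (rule spread_eq_8_3_if_reflect_eq_3[OF b z1])
  then show ?thesis
    using spread_le_cS[OF b] cS_le by simp
qed

text \<open>Equality \<open>N (x - c y) = 3 = N (2 x) + N (-z)\<close> in the triangle inequality, with
  \<open>z = x + c y\<close>, and Birkhoff orthogonality together force the \<open>\<ell>\<^sup>1\<close>-norm in the basis \<open>x, z\<close>.\<close>
lemma N_eq_l1_if_reflect_eq_3:
  assumes b: "birkhoff_orth N x y" and x1: "N x = 1"
    and z1: "N (x + c *\<^sub>R y) = 1" and w3: "N (x - c *\<^sub>R y) = 3"
  shows "N (l *\<^sub>R x + m *\<^sub>R (x + c *\<^sub>R y)) = \<bar>l\<bar> + \<bar>m\<bar>"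
proof -
  define z where "z = x + c *\<^sub>R y"
  have z1': "N z = 1"
    using z1 by (simp add: z_def)
  have same_sign: "N (l *\<^sub>R x + m *\<^sub>R z) = l + m" if "0 \<le> l" "0 \<le> m" for l m
  proof (rule antisym)
    show "N (l *\<^sub>R x + m *\<^sub>R z) \<le> l + m"
      using N_triangle[of "l *\<^sub>R x" "m *\<^sub>R z"] that x1 z1' by (simp add: N_scaleR)
    have "l *\<^sub>R x + m *\<^sub>R z = (l + m) *\<^sub>R x + (m * c) *\<^sub>R y"
      by (simp add: z_def algebra_simps)
    then show "l + m \<le> N (l *\<^sub>R x + m *\<^sub>R z)"
      using birkhoff_orth_coeff_le[OF b, of "l + m" "m * c"] that x1 by simp
  qed
  have "2 *\<^sub>R x + - z = x - c *\<^sub>R y"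
    by (simp add: z_def scaleR_2)
  then have "N (2 *\<^sub>R x + - z) = 3"
    using w3 by (simp only:)
  moreover have "N (2 *\<^sub>R x) + N (- z) = 3"
    using x1 z1' by (simp add: N_scaleR)
  ultimately have additive: "N (2 *\<^sub>R x + - z) = N (2 *\<^sub>R x) + N (- z)"
    by simp
  have opposite_sign: "N (l *\<^sub>R x + m *\<^sub>R z) = l - m" if "0 \<le> l" "m \<le> 0" for l m
  proof -
    have "l *\<^sub>R x + m *\<^sub>R z = (l / 2) *\<^sub>R (2 *\<^sub>R x) + (- m) *\<^sub>R (- z)"
      by simp
    then show ?thesis
      using N_nonneg_comb_if_additive[OF additive, of "l / 2" "- m"] that x1 z1'
      by (simp add: N_scaleR)
  qed
  have neg: "N (l *\<^sub>R x + m *\<^sub>R z) = N ((- l) *\<^sub>R x + (- m) *\<^sub>R z)" for l m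
    by (metis N_minus minus_add_distrib scaleR_minus_left)
  show ?thesis
    unfolding z_def[symmetric]
    using same_sign[of l m] same_sign[of "- l" "- m"] opposite_sign[of l m]
      opposite_sign[of "- l" "- m"] neg[of l m]
    by (cases "0 \<le> l"; cases "0 \<le> m") auto
qed

lemma unit_ball_eq_convex_hull_if_l1:
  assumes d: "det2 x z \<noteq> 0" and l1: "\<And>l m. N (l *\<^sub>R x + m *\<^sub>R z) = \<bar>l\<bar> + \<bar>m\<bar>"
  shows "unit_ball N = convex hull {x, z, - x, - z}"
proof
  have "N x = 1" "N z = 1"
    using l1[of 1 0] l1[of 0 1] by simp_all
  then show "convex hull {x, z, - x, - z} \<subseteq> unit_ball N"
    by (intro hull_minimal convex_unit_ball) (auto simp: unit_ball_def)
  show "unit_ball N \<subseteq> convex hull {x, z, - x, - z}"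
  proof
    fix w assume "w \<in> unit_ball N"
    define l m where "l = det2 w z / det2 x z" and "m = det2 x w / det2 x z"
    have w: "w = l *\<^sub>R x + m *\<^sub>R z"
      unfolding l_def m_def by (rule det2_decompose[OF d])
    then have "\<bar>l\<bar> + \<bar>m\<bar> \<le> 1"
      using \<open>w \<in> unit_ball N\<close> l1[of l m] by (simp add: unit_ball_def)
    then show "w \<in> convex hull {x, z, - x, - z}"
      unfolding w by (rule l1_ball_subset_convex_hull)
  qed
qed

text \<open>From \<open>z = \<alpha> x + \<beta> y\<close> and \<open>T z = 2 \<alpha> x - z\<close> one gets \<open>\<bar>\<alpha>\<bar> = 1\<close>; normalising the sign
  of \<open>z\<close> gives the situation of the previous lemmas, so the unit ball is the parallelogram
  with vertices \<open>\<plusminus>x, \<plusminus>\<alpha> z\<close>.\<close>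
lemma rectilinear_if_reflect_eq_3:
  assumes b: "birkhoff_orth N x y" and x1: "N x = 1" and z1: "N z = 1"
    and z3: "N (reflect x y z) = 3"
  shows "rectilinear N"
proof -
  have d: "det2 x y \<noteq> 0"
    by (rule birkhoff_orth_det2_nonzero[OF b])
  define \<alpha> \<beta> where "\<alpha> = det2 z y / det2 x y" and "\<beta> = det2 x z / det2 x y"
  have z: "z = \<alpha> *\<^sub>R x + \<beta> *\<^sub>R y"
    unfolding \<alpha>_def \<beta>_def by (rule det2_decompose[OF d])
  have Tz: "reflect x y z = \<alpha> *\<^sub>R x - \<beta> *\<^sub>R y"
    using reflect_comb[OF d] z by metis
  have "\<bar>\<alpha>\<bar> \<le> 1"
    using birkhoff_orth_coeff_le[OF b, of \<alpha> \<beta>] z x1 z1 by simp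
  moreover have "reflect x y z = (2 * \<alpha>) *\<^sub>R x - z"
    unfolding Tz by (simp add: z algebra_simps scaleR_2 flip: scaleR_scaleR)
  then have "3 \<le> 2 * \<bar>\<alpha>\<bar> + 1"
    using z3 N_triangle_diff[of "(2 * \<alpha>) *\<^sub>R x" z] x1 z1 by (simp add: N_scaleR abs_mult)
  ultimately have "\<bar>\<alpha>\<bar> = 1"
    by simp
  then have aa: "\<alpha> * \<alpha> = 1"
    by (metis abs_mult_self_eq mult.right_neutral)
  define c where "c = \<alpha> * \<beta>"
  define z' where "z' = x + c *\<^sub>R y"
  have "\<alpha> *\<^sub>R reflect x y z = x - c *\<^sub>R y"
    using aa by (simp add: Tz c_def scaleR_diff_right)
  moreover have "\<alpha> *\<^sub>R z = z'"
    using aa by (simp add: z c_def z'_def scaleR_add_right)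
  ultimately have z'1: "N z' = 1" and w3: "N (x - c *\<^sub>R y) = 3"
    using z1 z3 \<open>\<bar>\<alpha>\<bar> = 1\<close> by (metis N_scaleR mult_1)+
  have "c \<noteq> 0"
    using w3 x1 by auto
  then have dxz: "det2 x z' \<noteq> 0"
    using d by (simp add: z'_def)
  have K: "unit_ball N = convex hull {x, z', - x, - z'}"
    using N_eq_l1_if_reflect_eq_3[OF b x1 z'1[unfolded z'_def] w3]
    by (intro unit_ball_eq_convex_hull_if_l1[OF dxz]) (simp add: z'_def)
  have dd: "det2 (z' - x) (- x - z') \<noteq> 0"
    using dxz det2_swap[of z' x] by simp
  have "{x, x + (z' - x), x + (z' - x) + (- x - z'), x + (- x - z')} = {x, z', - x, - z'}"
    by simp
  then have "unit_circle N = frontier (convex hull {x, x + (z' - x), x + (z' - x) + (- x - z'),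
      x + (- x - z')})"
    using K frontier_unit_ball by simp
  then show ?thesis
    unfolding rectilinear_def using dd independent_iff_det2 by blast
qed

lemma tendsto_reflect:
  assumes "P \<longlonglongrightarrow> p" "Q \<longlonglongrightarrow> q" "R \<longlonglongrightarrow> r" "det2 p q \<noteq> 0"
  shows "(\<lambda>n. reflect (P n) (Q n) (R n)) \<longlonglongrightarrow> reflect p q r"
  unfolding reflect_def det2_def by (intro tendsto_intros assms[unfolded det2_def])

lemma near_extremal_triple_if_cS_eq_8_3:
  assumes "cS N = 8/3" "e > 0"
  obtains x y z where "N x = 1" "N y = 1" "N z = 1" "birkhoff_orth N x y"
    "3 - e < N (reflect x y z)"
proof -
  obtain x0 y0 where b0: "birkhoff_orth N x0 y0" and "8/3 - e < spread x0 y0"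
    using assms less_cSUP_iff[OF birkhoff_pairs_nonempty bdd_above_spread, of "8/3 - e"]
    unfolding cS_eq_SUP_spread by auto
  let ?A = "Txy x0 y0 ` unit_circle N"
  have "1/3 \<le> (INF z\<in>?A. N z)"
    by (rule cINF_greatest) (use unit_circle_nonempty N_Txy_unit_circle_bounds[OF b0] in auto)
  then have "3 - e < (SUP z\<in>?A. N z)"
    using \<open>8/3 - e < spread x0 y0\<close> by (simp add: spread_def)
  then obtain w where w: "w \<in> ?A" "3 - e < N w"
    using less_cSUP_iff[OF _ bdd_N_Txy_unit_circle(1)[OF b0]] unit_circle_nonempty by blast
  have d0: "det2 x0 y0 \<noteq> 0"
    by (rule birkhoff_orth_det2_nonzero[OF b0])
  obtain z where z: "N z = 1" "w = reflect x0 y0 z"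
    using w(1) Txy_eq_reflect[OF d0] by (auto simp: unit_circle_def)
  have "x0 \<noteq> 0" "y0 \<noteq> 0"
    using birkhoff_orth_nonzero[OF b0] by auto
  then have "1 / N x0 \<noteq> 0" "1 / N y0 \<noteq> 0"
    by auto
  then show ?thesis
    using that[of "(1 / N x0) *\<^sub>R x0" "(1 / N y0) *\<^sub>R y0" z] b0 z w(2)
      \<open>x0 \<noteq> 0\<close> \<open>y0 \<noteq> 0\<close>
    by (simp add: N_normalize birkhoff_orth_scaleR reflect_scaleR[OF d0])
qed

text \<open>The supremum defining \<open>c\<^sub>S\<close> is attained, by compactness of the unit circle and
  continuity of the reflection in the Birkhoff orthogonal pair.\<close>
lemma extremal_triple_if_cS_eq_8_3:
  assumes "cS N = 8/3"
  obtains x y z where "N x = 1" "N z = 1" "birkhoff_orth N x y" "N (reflect x y z) = 3"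
proof -
  define Q where "Q n t \<longleftrightarrow> t \<in> unit_circle N \<times> unit_circle N \<times> unit_circle N \<and>
     birkhoff_orth N (fst t) (fst (snd t)) \<and>
     3 - inverse (real (Suc n)) < N (reflect (fst t) (fst (snd t)) (snd (snd t)))" for n t
  have "\<exists>t. Q n t" for n
  proof -
    have "0 < inverse (real (Suc n))"
      by simp
    then obtain x y z where "N x = 1" "N y = 1" "N z = 1" "birkhoff_orth N x y"
      "3 - inverse (real (Suc n)) < N (reflect x y z)"
      by (rule near_extremal_triple_if_cS_eq_8_3[OF assms])
    then have "Q n (x, y, z)"
      by (simp add: Q_def unit_circle_def)
    then show ?thesis ..
  qed
  then obtain F where F: "\<And>n. Q n (F n)"
    by metis
  let ?S3 = "unit_circle N \<times> unit_circle N \<times> unit_circle N"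
  have "compact ?S3"
    using compact_unit_circle by (intro compact_Times)
  moreover have "\<forall>n. F n \<in> ?S3"
    using F by (simp add: Q_def)
  ultimately obtain l r where l: "l \<in> ?S3" and r: "strict_mono r" and lim: "(F \<circ> r) \<longlonglongrightarrow> l"
    using compact_imp_seq_compact seq_compactE by metis
  obtain x y z where lxyz: "l = (x, y, z)"
    by (cases l) auto
  let ?x = "\<lambda>n. fst (F (r n))" and ?y = "\<lambda>n. fst (snd (F (r n)))" and ?z = "\<lambda>n. snd (snd (F (r n)))"
  have lx: "?x \<longlonglongrightarrow> x" and ly: "?y \<longlonglongrightarrow> y" and lz: "?z \<longlonglongrightarrow> z"
    using tendsto_fst[OF lim] tendsto_fst[OF tendsto_snd[OF lim]] tendsto_snd[OF tendsto_snd[OF lim]]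
    by (simp_all add: lxyz o_def)
  have x1: "N x = 1" and y1: "N y = 1" and z1: "N z = 1"
    using l lxyz by (auto simp: unit_circle_def)
  have b: "birkhoff_orth N x y"
    using F x1 y1 by (intro birkhoff_orth_limit[OF lx ly]) (auto simp: Q_def)
  have "(\<lambda>n. N (reflect (?x n) (?y n) (?z n))) \<longlonglongrightarrow> N (reflect x y z)"
    by (intro tendsto_N tendsto_reflect lx ly lz birkhoff_orth_det2_nonzero[OF b])
  moreover have "3 - inverse (real (Suc n)) \<le> N (reflect (?x n) (?y n) (?z n))" for n
  proof -
    have "inverse (real (Suc (r n))) \<le> inverse (real (Suc n))"
      using seq_suble[OF r, of n] by (simp add: le_imp_inverse_le)
    moreover have "3 - inverse (real (Suc (r n))) < N (reflect (?x n) (?y n) (?z n))"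
      using F[of "r n"] by (simp only: Q_def)
    ultimately show ?thesis
      by linarith
  qed
  moreover have "(\<lambda>n. 3 - inverse (real (Suc n))) \<longlonglongrightarrow> 3"
    using tendsto_diff[OF tendsto_const LIMSEQ_inverse_real_of_nat, of 3] by simp
  ultimately have "3 \<le> N (reflect x y z)"
    using LIMSEQ_le by blast
  moreover have "N (reflect x y z) \<le> 3"
    using N_reflect_le[OF b, of z] z1 by simp
  ultimately show ?thesis
    using that x1 z1 b by simp
qed

lemma rectilinear_if_cS_eq_8_3: "cS N = 8/3 \<Longrightarrow> rectilinear N"
  using extremal_triple_if_cS_eq_8_3 rectilinear_if_reflect_eq_3 by metis

end

theorem theorem5p1:
  fixes N :: "'a::euclidean_space \<Rightarrow> real"
  assumes "DIM('a) = 2" and "is_norm N"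
  shows "0 \<le> cS N \<and> cS N \<le> 8 / 3 \<and>
         (cS N = 0 \<longleftrightarrow> inner_product_norm N) \<and>
         (cS N = 8 / 3 \<longleftrightarrow> rectilinear N)"
proof -
  obtain e1 e2 :: 'a where "Basis = {e1, e2}" "e1 \<noteq> e2"
    using assms(1) card_2_iff[of "Basis :: 'a set"] by auto
  then interpret plane N e1 e2
    using assms(2) by unfold_locales
  have "cS N = 0 \<longleftrightarrow> inner_product_norm N"
    using isometric_reflections_if_cS_eq_0 inner_product_norm_if_isometric_reflections
      isometric_reflections_if_inner_product_norm cS_eq_0_if_isometric_reflections by blast
  moreover have "cS N = 8 / 3 \<longleftrightarrow> rectilinear N"
    using cS_eq_8_3_if_rectilinear rectilinear_if_cS_eq_8_3 by auto
  ultimately show ?thesis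
    using cS_nonneg cS_le by simp
qed

end
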